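(* Let $X^{(\kappa)}_N$ be a twisted affine type. (1) There is a ring homomorphism $\varphi:\mathcal{Y}(X^{(\kappa)}_N)\to\mathcal{T}(X^{(\kappa)}_N)$ with $\varphi(Y^{(a)}_m(u))=\dfrac{M^{(a)}_m(u)}{T^{(a)}_{m-1}(u)T^{(a)}_{m+1}(u)}$ ($T^{(a)}_0(u)=1$) for all $a\in I_\sigma$, $m\in\mathbb{N}$, $u\in\mathbb{C}_{\kappa_a\hbar}$. (2) There is a ring homomorphism $\psi:\mathcal{T}(X^{(\kappa)}_N)\to\mathcal{Y}(X^{(\kappa)}_N)$ such that $\psi\circ\varphi=\mathrm{id}_{\mathcal{Y}(X^{(\kappa)}_N)}$.
   Context: Fix $\hbar\in\mathbb{C}\setminus2\pi\sqrt{-1}\mathbb{Q}$; $\mathbb{C}_c:=\mathbb{C}/(2\pi\sqrt{-1}/c)\mathbb{Z}$. Types: $A^{(2)}_{2r-1}$ ($r\ge2$), $A^{(2)}_{2r}$ ($r\ge1$), $D^{(2)}_{r+1}$ ($r\ge3$), $E^{(2)}_6$, $D^{(3)}_4$; $\kappa=3$ for $D^{(3)}_4$ and $2$ otherwise; $I_\sigma=\{1,\dots,r\}$ in the first three cases, $\{1,2,3,4\}$ for $E^{(2)}_6$, $\{1,2\}$ for $D^{(3)}_4$. $\kappa_a$: $A^{(2)}_{2r-1}$: $\kappa_a=1$ ($a<r$), $\kappa_r=2$; $A^{(2)}_{2r}$: all $1$; $D^{(2)}_{r+1}$: $\kappa_a=2$ ($a<r$), $\kappa_r=1$; $E^{(2)}_6$: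 $\kappa_1=\kappa_2=1$, $\kappa_3=\kappa_4=2$; $D^{(3)}_4$: $\kappa_1=1$, $\kappa_2=3$. $\Omega=2\pi\sqrt{-1}/(\kappa\hbar)$. $M^{(a)}_m(u)$: $A^{(2)}_{2r-1}$: $T^{(a-1)}_m(u)T^{(a+1)}_m(u)$ ($a\le r-1$), $M^{(r)}_m=T^{(r-1)}_m(u)T^{(r-1)}_m(u+\Omega)$; $A^{(2)}_{2r}$: $T^{(a-1)}_m(u)T^{(a+1)}_m(u)$ ($a\le r-1$), $M^{(r)}_m=T^{(r-1)}_m(u)T^{(r)}_m(u+\Omega)$; $D^{(2)}_{r+1}$: $T^{(a-1)}_m(u)T^{(a+1)}_m(u)$ ($a\le r-2$), $M^{(r-1)}_m=T^{(r-2)}_m(u)T^{(r)}_m(u)T^{(r)}_m(u+\Omega)$, $M^{(r)}_m=T^{(r-1)}_m(u)$; $E^{(2)}_6$: $M^{(1)}_m=T^{(2)}_m(u)$, $M^{(2)}_m=T^{(1)}_m(u)T^{(3)}_m(u)$, $M^{(3)}_m=T^{(2)}_m(u)T^{(2)}_m(u+\Omega)T^{(4)}_m(u)$, $M^{(4)}_m=T^{(3)}_m(u)$; $D^{(3)}_4$: $M^{(1)}_m=T^{(2)}_m(u)$, $M^{(2)}_m=T^{(1)}_m(u)T^{(1)}_m(u-\Omega)T^{(1)}_m(u+\Omega)$; with $T^{(0)}_m=1$. $\mathcal{T}(X^{(\kappa)}_N)$: commutative ring with generators $T^{(a)}_m(u)^{\pm1}$ ($a\in I_\sigma$, $m\in\mathbb{N}$,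 $u\in\mathbb{C}_{\kappa_a\hbar}$) and relations $T^{(a)}_m(u-1)T^{(a)}_m(u+1)=T^{(a)}_{m-1}(u)T^{(a)}_{m+1}(u)+M^{(a)}_m(u)$, $T^{(a)}_0=1$. $\mathcal{Y}(X^{(\kappa)}_N)$: commutative ring with generators $Y^{(a)}_m(u)^{\pm1}$, $(1+Y^{(a)}_m(u))^{-1}$ (same index set) and relations $Y^{(a)}_m(u-1)Y^{(a)}_m(u+1)=\dfrac{N^{(a)}_m(u)}{(1+Y^{(a)}_{m-1}(u)^{-1})(1+Y^{(a)}_{m+1}(u)^{-1})}$, with $Y^{(a)}_0(u)^{-1}=0$, where $N^{(a)}_m(u)$ is obtained from $M^{(a)}_m(u)$ by replacing every factor $T^{(b)}_m(v)$ with $1+Y^{(b)}_m(v)$ (and $Y^{(0)}_m=0$); e.g. for $A^{(2)}_{2r-1}$, $N^{(r)}_m=(1+Y^{(r-1)}_m(u))(1+Y^{(r-1)}_m(u+\Omega))$. *)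

theory Defs
  imports "HOL-Library.Poly_Mapping" "HOL-Algebra.QuotRing" "HOL-Algebra.Ideal" Complex_Main
begin

datatype twisted_type =
    A2odd nat    (* A^(2)_{2r-1}, r >= 2 *)
  | A2even nat   (* A^(2)_{2r},   r >= 1 *)
  | D2 nat       (* D^(2)_{r+1},  r >= 3 *)
  | E6_2
  | D4_3

fun valid_twisted :: "twisted_type \<Rightarrow> bool" where
  "valid_twisted (A2odd r) = (r \<ge> 2)"
| "valid_twisted (A2even r) = (r \<ge> 1)"
| "valid_twisted (D2 r) = (r \<ge> 3)"
| "valid_twisted E6_2 = True"
| "valid_twisted D4_3 = True"

fun kappa :: "twisted_type \<Rightarrow> nat" where
  "kappa D4_3 = 3"
| "kappa _ = 2"

fun I_sigma :: "twisted_type \<Rightarrow> nat set" where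
  "I_sigma (A2odd r) = {1..r}"
| "I_sigma (A2even r) = {1..r}"
| "I_sigma (D2 r) = {1..r}"
| "I_sigma E6_2 = {1,2,3,4}"
| "I_sigma D4_3 = {1,2}"

fun kappa_a :: "twisted_type \<Rightarrow> nat \<Rightarrow> nat" where
  "kappa_a (A2odd r) a = (if a < r then 1 else 2)"
| "kappa_a (A2even r) a = 1"
| "kappa_a (D2 r) a = (if a < r then 2 else 1)"
| "kappa_a E6_2 a = (if a \<le> 2 then 1 else 2)"
| "kappa_a D4_3 a = (if a = 1 then 1 else 3)"

definition Omega :: "twisted_type \<Rightarrow> complex \<Rightarrow> complex" where
  "Omega X h = 2 * pi * \<i> / (of_nat (kappa X) * h)"

text \<open>Period of the spectral parameter of nodes a: u lives in C / (2 pi i/(kappa_a h)) Z.\<close>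
definition period :: "twisted_type \<Rightarrow> complex \<Rightarrow> nat \<Rightarrow> complex" where
  "period X h a = 2 * pi * \<i> / (of_nat (kappa_a X a) * h)"

text \<open>M^{(a)}_m(u), expressed in terms of a family T b m v (which must return 1 for b = 0).\<close>
fun Mexpr :: "twisted_type \<Rightarrow> complex \<Rightarrow> (nat \<Rightarrow> nat \<Rightarrow> complex \<Rightarrow> 'r::comm_ring_1)
               \<Rightarrow> nat \<Rightarrow> nat \<Rightarrow> complex \<Rightarrow> 'r" where
  "Mexpr (A2odd r) h T a m u =
     (if a \<le> r - 1 then T (a - 1) m u * T (a + 1) m u
      else T (r - 1) m u * T (r - 1) m (u + Omega (A2odd r) h))"
| "Mexpr (A2even r) h T a m u =
     (if a \<le> r - 1 then T (a - 1) m u * T (a + 1) m u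
      else T (r - 1) m u * T r m (u + Omega (A2even r) h))"
| "Mexpr (D2 r) h T a m u =
     (if a \<le> r - 2 then T (a - 1) m u * T (a + 1) m u
      else if a = r - 1 then T (r - 2) m u * T r m u * T r m (u + Omega (D2 r) h)
      else T (r - 1) m u)"
| "Mexpr E6_2 h T a m u =
     (if a = 1 then T 2 m u
      else if a = 2 then T 1 m u * T 3 m u
      else if a = 3 then T 2 m u * T 2 m (u + Omega E6_2 h) * T 4 m u
      else T 3 m u)"
| "Mexpr D4_3 h T a m u =
     (if a = 1 then T 2 m u
      else T 1 m u * T 1 m (u - Omega D4_3 h) * T 1 m (u + Omega D4_3 h))"

type_synonym 'v zpoly = "('v \<Rightarrow>\<^sub>0 nat) \<Rightarrow>\<^sub>0 int"

definition var :: "'v \<Rightarrow> 'v zpoly" where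
  "var v = Poly_Mapping.single (Poly_Mapping.single v 1) 1"

definition poly_ring :: "'v zpoly ring" where
  "poly_ring = \<lparr>carrier = UNIV, monoid.mult = (*), one = 1, zero = 0, add = (+)\<rparr>"

text \<open>The commutative ring presented by generators 'v and relations rels (each relation r means r = 0).\<close>
definition presented_ring :: "'v zpoly set \<Rightarrow> 'v zpoly set ring" where
  "presented_ring rels = poly_ring Quot (genideal poly_ring rels)"

definition cls :: "'v zpoly set \<Rightarrow> 'v zpoly \<Rightarrow> 'v zpoly set" where
  "cls rels p = a_r_coset poly_ring (genideal poly_ring rels) p"

text \<open>TG a m u stands for T^{(a)}_m(u), TI a m u for its inverse.\<close>
datatype tgen = TG nat nat complex | TI nat nat complex

definition Tval :: "nat \<Rightarrow> nat \<Rightarrow> complex \<Rightarrow> tgen zpoly" where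
  "Tval a m u = (if a = 0 \<or> m = 0 then 1 else var (TG a m u))"

definition Tinvval :: "nat \<Rightarrow> nat \<Rightarrow> complex \<Rightarrow> tgen zpoly" where
  "Tinvval a m u = (if a = 0 \<or> m = 0 then 1 else var (TI a m u))"

definition valid_idx :: "twisted_type \<Rightarrow> nat \<Rightarrow> nat \<Rightarrow> bool" where
  "valid_idx X a m \<longleftrightarrow> a \<in> I_sigma X \<and> 1 \<le> m"

text \<open>Generators with indices outside I_sigma x N_{>0} are killed; u is taken modulo the period.\<close>
definition Trels :: "twisted_type \<Rightarrow> complex \<Rightarrow> tgen zpoly set" where
  "Trels X h =
     {var (TG a m u) * var (TI a m u) - 1 | a m u. valid_idx X a m}
   \<union> {var (TG a m u) | a m u. \<not> valid_idx X a m}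
   \<union> {var (TI a m u) | a m u. \<not> valid_idx X a m}
   \<union> {var (TG a m u) - var (TG a m (u + period X h a)) | a m u. True}
   \<union> {var (TI a m u) - var (TI a m (u + period X h a)) | a m u. True}
   \<union> {Tval a m (u - 1) * Tval a m (u + 1)
        - (Tval a (m - 1) u * Tval a (m + 1) u + Mexpr X h Tval a m u) | a m u. valid_idx X a m}"

definition Tring :: "twisted_type \<Rightarrow> complex \<Rightarrow> tgen zpoly set ring" where
  "Tring X h = presented_ring (Trels X h)"

text \<open>YG a m u stands for Y^{(a)}_m(u), YI a m u for its inverse, YW a m u for (1 + Y^{(a)}_m(u))^{-1}.\<close>
datatype ygen = YG nat nat complex | YI nat nat complex | YW nat nat complex

definition Yval :: "nat \<Rightarrow> nat \<Rightarrow> complex \<Rightarrow> ygen zpoly" where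
  "Yval a m u = (if a = 0 \<or> m = 0 then 0 else var (YG a m u))"

text \<open>(1 + Y^{(a)}_k(u)^{-1})^{-1} = Y/(1+Y); equal to 1 for k = 0 since Y_0^{-1} = 0.\<close>
definition Yfac :: "nat \<Rightarrow> nat \<Rightarrow> complex \<Rightarrow> ygen zpoly" where
  "Yfac a k u = (if k = 0 then 1 else var (YG a k u) * var (YW a k u))"

definition Yrels :: "twisted_type \<Rightarrow> complex \<Rightarrow> ygen zpoly set" where
  "Yrels X h =
     {var (YG a m u) * var (YI a m u) - 1 | a m u. valid_idx X a m}
   \<union> {(1 + var (YG a m u)) * var (YW a m u) - 1 | a m u. valid_idx X a m}
   \<union> {var (YG a m u) | a m u. \<not> valid_idx X a m}
   \<union> {var (YI a m u) | a m u. \<not> valid_idx X a m}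
   \<union> {var (YW a m u) | a m u. \<not> valid_idx X a m}
   \<union> {var (YG a m u) - var (YG a m (u + period X h a)) | a m u. True}
   \<union> {var (YI a m u) - var (YI a m (u + period X h a)) | a m u. True}
   \<union> {var (YW a m u) - var (YW a m (u + period X h a)) | a m u. True}
   \<union> {var (YG a m (u - 1)) * var (YG a m (u + 1))
        - Mexpr X h (\<lambda>b k v. 1 + Yval b k v) a m u * Yfac a (m - 1) u * Yfac a (m + 1) u
        | a m u. valid_idx X a m}"

definition Yring :: "twisted_type \<Rightarrow> complex \<Rightarrow> ygen zpoly set ring" where
  "Yring X h = presented_ring (Yrels X h)"

definition phi_img :: "twisted_type \<Rightarrow> complex \<Rightarrow> nat \<Rightarrow> nat \<Rightarrow> complex \<Rightarrow> tgen zpoly" where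
  "phi_img X h a m u = Mexpr X h Tval a m u * Tinvval a (m - 1) u * Tinvval a (m + 1) u"

end

theory Submission
  imports Defs
begin

text \<open>The homomorphism \<open>\<phi>\<close> is forced on the generators, and the T-system makes the Y-system
  and the other defining relations of the Y-ring hold.

  For \<open>\<psi>\<close> the formula for \<open>\<phi>(Y\<^sub>m)\<close> is solved for \<open>T\<^sub>m\<^sub>+\<^sub>1\<close>, so everything is
  determined by \<open>T\<^sub>1\<close>, which has to satisfy
  \<open>T\<^sub>1(u - 1) T\<^sub>1(u + 1) = M\<^sub>1(u) (1 + Y\<^sub>1(u)) / Y\<^sub>1(u)\<close>. Since \<open>h \<notin> 2\<pi>i\<rat>\<close>, the group
  \<open>\<int> + \<rat>\<cdot>2\<pi>i/h\<close> is a direct sum, so every \<open>u\<close> has an integer level which is shifted by one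
  under \<open>u \<mapsto> u \<plusminus> 1\<close> and is invariant under the shifts by \<open>\<Omega>\<close> and by the periods occurring
  in \<open>M\<close>. Setting \<open>T\<^sub>1 = 1\<close> on the levels \<open>0\<close> and \<open>1\<close> and solving the level one equation
  forwards and backwards defines \<open>T\<^sub>1\<close>. Induction on \<open>m\<close>, using the Y-system, then gives the
  T-system for \<open>\<psi>(T)\<close>, and \<open>\<psi> \<circ> \<phi>\<close> is the identity on generators.\<close>

section \<open>Congruence modulo relations in a free commutative ring\<close>

lemma poly_ring_simps [simp]:
  "carrier poly_ring = UNIV" "monoid.mult poly_ring = (*)" "add poly_ring = (+)"
  "one poly_ring = 1" "zero poly_ring = 0"
  by (simp_all add: poly_ring_def)

lemma cring_poly_ring: "cring (poly_ring :: 'v zpoly ring)"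
proof (rule cringI)
  show "abelian_group (poly_ring :: 'v zpoly ring)"
    by (rule abelian_groupI) (auto intro: left_minus)
  show "Group.comm_monoid (poly_ring :: 'v zpoly ring)"
    by (rule comm_monoidI) (auto simp: mult.commute)
qed (auto simp: distrib_right)

interpretation poly_ring: cring "poly_ring :: 'v zpoly ring"
  by (rule cring_poly_ring)

lemma poly_ring_a_inv [simp]: "a_inv poly_ring x = - (x :: 'v zpoly)"
  by (rule poly_ring.minus_equality) auto

lemma poly_ring_a_minus [simp]: "a_minus poly_ring x y = x - (y :: 'v zpoly)"
  by (simp add: a_minus_def)

lemma ideal_genideal_poly_ring: "ideal (genideal poly_ring R) poly_ring"
  by (rule poly_ring.genideal_ideal) simp

definition rel_cong :: "'v zpoly set \<Rightarrow> 'v zpoly \<Rightarrow> 'v zpoly \<Rightarrow> bool"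
    ("(_ \<turnstile>/ _ \<approx>/ _)" [51, 51, 51] 50) where
  "R \<turnstile> x \<approx> y \<longleftrightarrow> x - y \<in> genideal poly_ring R"

lemma rel_cong_refl [simp]: "R \<turnstile> x \<approx> x"
proof -
  interpret ideal "genideal poly_ring R" poly_ring by (rule ideal_genideal_poly_ring)
  show ?thesis using zero_closed by (simp add: rel_cong_def)
qed

lemma rel_cong_sym: "R \<turnstile> x \<approx> y \<Longrightarrow> R \<turnstile> y \<approx> x"
proof -
  interpret ideal "genideal poly_ring R" poly_ring by (rule ideal_genideal_poly_ring)
  show "R \<turnstile> x \<approx> y \<Longrightarrow> R \<turnstile> y \<approx> x"
    using a_inv_closed[of "x - y"] by (simp add: rel_cong_def)
qed

lemma rel_cong_add: "R \<turnstile> x \<approx> y \<Longrightarrow> R \<turnstile> x' \<approx> y' \<Longrightarrow> R \<turnstile> x + x' \<approx> y + y'"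
proof -
  interpret ideal "genideal poly_ring R" poly_ring by (rule ideal_genideal_poly_ring)
  show "R \<turnstile> x \<approx> y \<Longrightarrow> R \<turnstile> x' \<approx> y' \<Longrightarrow> R \<turnstile> x + x' \<approx> y + y'"
    using a_closed[of "x - y" "x' - y'"] by (simp add: rel_cong_def algebra_simps)
qed

lemma rel_cong_trans [trans]: "R \<turnstile> x \<approx> y \<Longrightarrow> R \<turnstile> y \<approx> z \<Longrightarrow> R \<turnstile> x \<approx> z"
  using rel_cong_add[of R x y y z] by (simp add: rel_cong_def)

lemma rel_cong_diff: "R \<turnstile> x \<approx> y \<Longrightarrow> R \<turnstile> x' \<approx> y' \<Longrightarrow> R \<turnstile> x - x' \<approx> y - y'"
proof -
  interpret ideal "genideal poly_ring R" poly_ring by (rule ideal_genideal_poly_ring)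
  have "x - x' - (y - y') = (x - y) + - (x' - y')"
    by simp
  then show "R \<turnstile> x \<approx> y \<Longrightarrow> R \<turnstile> x' \<approx> y' \<Longrightarrow> R \<turnstile> x - x' \<approx> y - y'"
    unfolding rel_cong_def by (metis a_closed a_inv_closed poly_ring_a_inv poly_ring_simps(3))
qed

lemma rel_cong_mult: "R \<turnstile> x \<approx> y \<Longrightarrow> R \<turnstile> x' \<approx> y' \<Longrightarrow> R \<turnstile> x * x' \<approx> y * y'"
proof -
  interpret ideal "genideal poly_ring R" poly_ring by (rule ideal_genideal_poly_ring)
  assume "R \<turnstile> x \<approx> y" "R \<turnstile> x' \<approx> y'"
  then have "(x - y) * x' \<in> genideal poly_ring R" "y * (x' - y') \<in> genideal poly_ring R"
    using I_r_closed I_l_closed by (auto simp: rel_cong_def)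
  moreover have "x * x' - y * y' = (x - y) * x' + y * (x' - y')"
    by (simp add: algebra_simps)
  ultimately show ?thesis
    using a_closed by (auto simp: rel_cong_def)
qed

lemma rel_cong_zero_iff: "R \<turnstile> x - y \<approx> 0 \<longleftrightarrow> R \<turnstile> x \<approx> y"
  by (simp add: rel_cong_def)

lemma rel_cong_relator: "x - y \<in> R \<Longrightarrow> R \<turnstile> x \<approx> y"
  using poly_ring.genideal_self[of R] by (auto simp: rel_cong_def)

lemma rel_cong_relator_zero: "x \<in> R \<Longrightarrow> R \<turnstile> x \<approx> 0"
  using rel_cong_relator[of x 0] by simp

lemma rel_cong_prod:
  "finite S \<Longrightarrow> (\<And>i. i \<in> S \<Longrightarrow> R \<turnstile> f i \<approx> g i) \<Longrightarrow> R \<turnstile> prod f S \<approx> prod g S"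
  by (induction S rule: finite_induct) (simp_all add: rel_cong_mult)

lemma rel_cong_power: "R \<turnstile> x \<approx> y \<Longrightarrow> R \<turnstile> x ^ k \<approx> y ^ k"
  by (induction k) (simp_all add: rel_cong_mult)

lemma cls_eq_iff_rel_cong: "cls R p = cls R q \<longleftrightarrow> R \<turnstile> p \<approx> q"
proof -
  interpret ideal "genideal poly_ring R" poly_ring by (rule ideal_genideal_poly_ring)
  have "cls R p = cls R q \<longleftrightarrow> p \<in> cls R q"
    unfolding cls_def by (metis a_rcos_self a_repr_independence' UNIV_I poly_ring_simps(1))
  also have "\<dots> \<longleftrightarrow> R \<turnstile> p \<approx> q"
    unfolding cls_def rel_cong_def using a_rcos_module_minus[OF poly_ring.ring_axioms, of q p] by simp
  finally show ?thesis .
qed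

lemma mem_cls_iff: "q \<in> cls R p \<longleftrightarrow> R \<turnstile> q \<approx> p"
proof -
  interpret ideal "genideal poly_ring R" poly_ring by (rule ideal_genideal_poly_ring)
  show ?thesis
    unfolding cls_def rel_cong_def using a_rcos_module_minus[OF poly_ring.ring_axioms, of p q] by simp
qed

section \<open>Substitution homomorphisms and induced maps of presented rings\<close>

definition subst_monomial :: "('v \<Rightarrow> 'w zpoly) \<Rightarrow> ('v \<Rightarrow>\<^sub>0 nat) \<Rightarrow> 'w zpoly" where
  "subst_monomial g m = (\<Prod>v\<in>Poly_Mapping.keys m. g v ^ Poly_Mapping.lookup m v)"

definition poly_subst :: "('v \<Rightarrow> 'w zpoly) \<Rightarrow> 'v zpoly \<Rightarrow> 'w zpoly" where
  "poly_subst g p = frag_extend (subst_monomial g) p"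

lemma subst_monomial_superset:
  assumes "finite S" "Poly_Mapping.keys m \<subseteq> S"
  shows "subst_monomial g m = (\<Prod>v\<in>S. g v ^ Poly_Mapping.lookup m v)"
  unfolding subst_monomial_def
  by (rule prod.mono_neutral_left) (use assms in \<open>auto simp: in_keys_iff\<close>)

lemma subst_monomial_add: "subst_monomial g (m + n) = subst_monomial g m * subst_monomial g n"
proof -
  let ?S = "Poly_Mapping.keys m \<union> Poly_Mapping.keys n"
  have "subst_monomial g (m + n) = (\<Prod>v\<in>?S. g v ^ Poly_Mapping.lookup (m + n) v)"
    using keys_add[of m n] by (intro subst_monomial_superset) auto
  also have "\<dots> = (\<Prod>v\<in>?S. g v ^ Poly_Mapping.lookup m v) * (\<Prod>v\<in>?S. g v ^ Poly_Mapping.lookup n v)"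
    by (simp add: lookup_add power_add prod.distrib)
  also have "\<dots> = subst_monomial g m * subst_monomial g n"
    using subst_monomial_superset[of ?S m g] subst_monomial_superset[of ?S n g] by auto
  finally show ?thesis .
qed

lemma poly_subst_zero [simp]: "poly_subst g 0 = 0"
  by (simp add: poly_subst_def)

lemma poly_subst_add [simp]: "poly_subst g (p + q) = poly_subst g p + poly_subst g q"
  by (simp add: poly_subst_def frag_extend_add)

lemma poly_subst_diff [simp]: "poly_subst g (p - q) = poly_subst g p - poly_subst g q"
  by (simp add: poly_subst_def frag_extend_diff)

lemma poly_subst_monomial: "poly_subst g (frag_of m) = subst_monomial g m"
  by (simp add: poly_subst_def)

lemma poly_subst_one [simp]: "poly_subst g 1 = 1"
  using poly_subst_monomial[of g 0] by (simp add: subst_monomial_def)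

lemma poly_subst_var [simp]: "poly_subst g (var v) = g v"
  by (simp add: var_def poly_subst_monomial subst_monomial_def)

lemma poly_subst_mult [simp]: "poly_subst g (p * q) = poly_subst g p * poly_subst g q"
proof -
  have monomial: "poly_subst g (frag_of m * q) = subst_monomial g m * poly_subst g q" for m
    using subset_UNIV[of "Poly_Mapping.keys q"]
    by (induction q rule: frag_induction)
       (simp_all add: mult_single poly_subst_monomial subst_monomial_add right_diff_distrib)
  show ?thesis
    using subset_UNIV[of "Poly_Mapping.keys p"]
    by (induction p rule: frag_induction)
       (simp_all add: monomial poly_subst_monomial left_diff_distrib)
qed

lemma poly_subst_power: "poly_subst g (p ^ k) = poly_subst g p ^ k"
  by (induction k) simp_all

lemma poly_subst_prod: "finite S \<Longrightarrow> poly_subst g (\<Prod>i\<in>S. f i) = (\<Prod>i\<in>S. poly_subst g (f i))"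
  by (induction S rule: finite_induct) simp_all

lemma poly_subst_var_eq_id: "poly_subst var p = p"
proof -
  have "(\<Prod>v\<in>S. var v ^ Poly_Mapping.lookup m v)
          = frag_of (\<Sum>v\<in>S. Poly_Mapping.single v (Poly_Mapping.lookup m v))" if "finite S" for S m
    using that
  proof (induction S rule: finite_induct)
    case (insert v S)
    have "var v ^ k = frag_of (Poly_Mapping.single v k)" for k
      by (induction k) (simp_all add: var_def mult_single single_add[symmetric])
    with insert show ?case by (simp add: mult_single)
  qed simp
  moreover have "(\<Sum>v\<in>Poly_Mapping.keys m. Poly_Mapping.single v (Poly_Mapping.lookup m v)) = m" for m
    by (rule poly_mapping_eqI)
       (auto simp: lookup_sum lookup_single when_def in_keys_iff intro: sum.neutral)
  ultimately have monomial: "subst_monomial var m = frag_of m" for m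
    by (metis finite_keys subst_monomial_def)
  show ?thesis
    using subset_UNIV[of "Poly_Mapping.keys p"]
    by (induction p rule: frag_induction) (simp_all add: monomial poly_subst_monomial)
qed

lemma poly_subst_poly_subst: "poly_subst f (poly_subst g p) = poly_subst (\<lambda>v. poly_subst f (g v)) p"
  using subset_UNIV[of "Poly_Mapping.keys p"]
  by (induction p rule: frag_induction)
     (simp_all add: poly_subst_monomial subst_monomial_def poly_subst_prod poly_subst_power)

lemma rel_cong_poly_subst_fun:
  assumes "\<And>v. R \<turnstile> f v \<approx> g v"
  shows "R \<turnstile> poly_subst f p \<approx> poly_subst g p"
  using subset_UNIV[of "Poly_Mapping.keys p"]
proof (induction p rule: frag_induction)
  case (one m)
  show ?case
    by (simp add: poly_subst_monomial subst_monomial_def rel_cong_prod rel_cong_power assms)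
qed (simp_all add: rel_cong_diff)

definition respects_rels :: "('v \<Rightarrow> 'w zpoly) \<Rightarrow> 'v zpoly set \<Rightarrow> 'w zpoly set \<Rightarrow> bool" where
  "respects_rels g R1 R2 \<longleftrightarrow> (\<forall>r\<in>R1. R2 \<turnstile> poly_subst g r \<approx> 0)"

lemma rel_cong_poly_subst:
  assumes "respects_rels g R1 R2" "R1 \<turnstile> p \<approx> q"
  shows "R2 \<turnstile> poly_subst g p \<approx> poly_subst g q"
proof -
  interpret h: ring_hom_ring poly_ring poly_ring "poly_subst g"
    by (intro ring_hom_ringI2 poly_ring.ring_axioms ring_hom_memI) simp_all
  have "ideal {r \<in> carrier poly_ring. R2 \<turnstile> poly_subst g r \<approx> 0} poly_ring"
    using h.ideal_vimage[OF ideal_genideal_poly_ring] by (simp add: rel_cong_def)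
  then have "genideal poly_ring R1 \<subseteq> {r. R2 \<turnstile> poly_subst g r \<approx> 0}"
    using assms(1) by (intro poly_ring.genideal_minimal) (auto simp: respects_rels_def)
  then show ?thesis
    using assms(2) by (auto simp: rel_cong_def)
qed

definition induced_map ::
    "'v zpoly set \<Rightarrow> 'w zpoly set \<Rightarrow> ('v \<Rightarrow> 'w zpoly) \<Rightarrow> 'v zpoly set \<Rightarrow> 'w zpoly set" where
  "induced_map R1 R2 g C = (\<Union>p\<in>C. cls R2 (poly_subst g p))"

lemma induced_map_cls:
  assumes "respects_rels g R1 R2"
  shows "induced_map R1 R2 g (cls R1 p) = cls R2 (poly_subst g p)"
proof -
  have "cls R2 (poly_subst g q) = cls R2 (poly_subst g p)" if "q \<in> cls R1 p" for q
    using that rel_cong_poly_subst[OF assms] by (simp add: mem_cls_iff cls_eq_iff_rel_cong)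
  moreover have "p \<in> cls R1 p"
    by (simp add: mem_cls_iff)
  ultimately show ?thesis
    unfolding induced_map_def by blast
qed

lemma carrier_presented_ring: "carrier (presented_ring R) = range (cls R)"
  by (auto simp: presented_ring_def FactRing_def A_RCOSETS_def' cls_def)

lemma presented_ring_ops:
  "monoid.mult (presented_ring R) (cls R p) (cls R q) = cls R (p * q)"
  "add (presented_ring R) (cls R p) (cls R q) = cls R (p + q)"
  "one (presented_ring R) = cls R 1"
proof -
  interpret ideal "genideal poly_ring R" poly_ring by (rule ideal_genideal_poly_ring)
  show "monoid.mult (presented_ring R) (cls R p) (cls R q) = cls R (p * q)"
    using rcoset_mult_add[of p q] by (simp add: presented_ring_def FactRing_def cls_def)
  show "add (presented_ring R) (cls R p) (cls R q) = cls R (p + q)"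
    using a_rcos_sum[of p q] by (simp add: presented_ring_def FactRing_def cls_def)
  show "one (presented_ring R) = cls R 1"
    by (simp add: presented_ring_def FactRing_def cls_def)
qed

lemma induced_map_ring_hom:
  assumes "respects_rels g R1 R2"
  shows "induced_map R1 R2 g \<in> ring_hom (presented_ring R1) (presented_ring R2)"
  by (rule ring_hom_memI)
     (auto simp: carrier_presented_ring presented_ring_ops induced_map_cls[OF assms])

lemma induced_map_left_inverse:
  assumes "respects_rels g R1 R2" "respects_rels f R2 R1"
    and "\<And>v. R1 \<turnstile> poly_subst f (g v) \<approx> var v"
    and "x \<in> carrier (presented_ring R1)"
  shows "induced_map R2 R1 f (induced_map R1 R2 g x) = x"
proof -
  obtain p where "x = cls R1 p"
    using assms(4) by (auto simp: carrier_presented_ring)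
  moreover have "R1 \<turnstile> poly_subst (\<lambda>v. poly_subst f (g v)) p \<approx> poly_subst var p"
    by (rule rel_cong_poly_subst_fun) (rule assms(3))
  ultimately show ?thesis
    by (simp add: induced_map_cls assms(1,2) poly_subst_poly_subst poly_subst_var_eq_id
        cls_eq_iff_rel_cong)
qed

lemma Mexpr_mult:
  "Mexpr X h (\<lambda>b k v. f b k v * g b k v) a m u = Mexpr X h f a m u * Mexpr X h g a m u"
  by (cases X) (auto simp: algebra_simps)

lemma Mexpr_hom:
  assumes "\<And>x y. F (x * y) = F x * F y"
  shows "F (Mexpr X h f a m u) = Mexpr X h (\<lambda>b k v. F (f b k v)) a m u"
  by (cases X) (auto simp: assms)

lemma Mexpr_one: "Mexpr X h (\<lambda>b k v. 1) a m u = 1"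
  by (cases X) auto

lemma Mexpr_shift: "Mexpr X h f a m (u + c) = Mexpr X h (\<lambda>b k v. f b k (v + c)) a m u"
  by (cases X) (auto simp: algebra_simps)

lemma Mexpr_shift_diff: "Mexpr X h f a m (u - c) = Mexpr X h (\<lambda>b k v. f b k (v - c)) a m u"
  using Mexpr_shift[of X h f a m u "- c"] by simp

lemma Mexpr_level: "Mexpr X h f a m u = Mexpr X h (\<lambda>b k v. f b m v) a m' u"
  by (cases X) auto

lemma Mexpr_reindex_level: "Mexpr X h (\<lambda>b k v. f b (s k) v) a m u = Mexpr X h f a (s m) u"
  using Mexpr_level[of X h "\<lambda>b k v. f b (s k) v" a m u 0] Mexpr_level[of X h f a "s m" u 0]
  by simp

lemma Mexpr_local:
  assumes "\<And>b k. f b k u = g b k u"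
    and "\<And>b k. f b k (u + Omega X h) = g b k (u + Omega X h)"
    and "\<And>b k. f b k (u - Omega X h) = g b k (u - Omega X h)"
  shows "Mexpr X h f a m u = Mexpr X h g a m u"
  using assms by (cases X) auto

lemma rel_cong_Mexpr:
  assumes "\<And>b k v. R \<turnstile> f b k v \<approx> g b k v"
  shows "R \<turnstile> Mexpr X h f a m u \<approx> Mexpr X h g a m u"
  by (cases X) (auto intro!: rel_cong_mult assms)

definition period_rep :: "complex \<Rightarrow> complex \<Rightarrow> complex" where
  "period_rep p v = (SOME w. \<exists>n::int. w = v + of_int n * p)"

lemma period_rep_add_period: "period_rep p (v + p) = period_rep p v"
proof -
  have "(\<exists>n::int. w = v + p + of_int n * p) \<longleftrightarrow> (\<exists>n::int. w = v + of_int n * p)" for w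
    by (metis (no_types, opaque_lifting) add.commute add.left_commute diff_add_cancel
        mult.commute mult_1_right of_int_1 of_int_diff of_int_add ring_class.ring_distribs(1))
  then show ?thesis
    unfolding period_rep_def by simp
qed

lemma rel_cong_period_rep:
  assumes "\<And>v. R \<turnstile> f (v + p) \<approx> f v"
  shows "R \<turnstile> f (period_rep p v) \<approx> f v"
proof -
  have forward: "R \<turnstile> f (w + of_nat k * p) \<approx> f w" for k w
  proof (induction k)
    case (Suc k)
    have "R \<turnstile> f (w + of_nat (Suc k) * p) \<approx> f (w + of_nat k * p)"
      using assms[of "w + of_nat k * p"] by (simp add: algebra_simps)
    then show ?case
      using Suc rel_cong_trans by blast
  qed simp
  have "R \<turnstile> f (v + of_int n * p) \<approx> f v" for n :: int
  proof (cases "n \<ge> 0")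
    case True
    then show ?thesis
      using forward[of v "nat n"] by simp
  next
    case False
    then have "v + of_int n * p + of_nat (nat (- n)) * p = v"
      by (simp add: algebra_simps of_nat_nat)
    then show ?thesis
      using forward[of "v + of_int n * p" "nat (- n)"] by (metis rel_cong_sym)
  qed
  moreover have "\<exists>n::int. period_rep p v = v + of_int n * p"
    unfolding period_rep_def by (rule someI_ex) (rule exI[of _ v], rule exI[of _ 0], simp)
  ultimately show ?thesis
    by metis
qed

locale twisted =
  fixes X :: twisted_type and h :: complex
  assumes valid: "valid_twisted X"
    and h_nonzero: "h \<noteq> 0"
begin

lemma zero_notin_I_sigma [simp]: "0 \<notin> I_sigma X"
  by (cases X) auto

lemma Mexpr_restrict:
  assumes "a \<in> I_sigma X"
  shows "Mexpr X h f a m u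
           = Mexpr X h (\<lambda>b k v. if b = 0 \<or> b \<in> I_sigma X then f b m v else 0) a m u"
  using valid assms by (cases X) auto

lemma rel_cong_Mexpr_nodes:
  assumes "a \<in> I_sigma X"
    and "\<And>b v. b = 0 \<or> b \<in> I_sigma X \<Longrightarrow> R \<turnstile> f b m v \<approx> g b m v"
  shows "R \<turnstile> Mexpr X h f a m u \<approx> Mexpr X h g a m u"
  unfolding Mexpr_restrict[OF assms(1), of f] Mexpr_restrict[OF assms(1), of g]
  by (rule rel_cong_Mexpr) (simp add: assms(2))

lemma period_eq:
  "period (A2odd r) h b = (if b < r then 2 * Omega (A2odd r) h else Omega (A2odd r) h)"
  "period (A2even r) h b = 2 * Omega (A2even r) h"
  "period (D2 r) h b = (if b < r then Omega (D2 r) h else 2 * Omega (D2 r) h)"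
  "period E6_2 h b = (if b \<le> 2 then 2 * Omega E6_2 h else Omega E6_2 h)"
  "period D4_3 h b = (if b = 1 then 3 * Omega D4_3 h else Omega D4_3 h)"
  using h_nonzero by (auto simp: period_def Omega_def field_simps)

lemma Mexpr_periodic:
  assumes a: "a \<in> I_sigma X"
    and periodic: "\<And>b k v. f b k (v + period X h b) = f b k v"
  shows "Mexpr X h f a m (u + period X h a) = Mexpr X h f a m u"
proof -
  let ?\<Omega> = "Omega X h"
  have multiple: "f b k (v + of_nat n * period X h b) = f b k v" for b k v n
  proof (induction n)
    case (Suc n)
    have "f b k (v + of_nat (Suc n) * period X h b)
            = f b k ((v + of_nat n * period X h b) + period X h b)"
      by (simp add: algebra_simps)
    then show ?case
      using Suc periodic by simp
  qed simp
  have shift: "f b k (v + c) = f b k v" "f b k (c + v) = f b k v"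
    if "period X h b = c \<or> 2 * period X h b = c" for b k v c
    using that periodic multiple[of b k v 2] by (auto simp: add.commute)
  have thrice: "f b k (2 * ?\<Omega> + v) = f b k (v - ?\<Omega>)" if "period X h b = 3 * ?\<Omega>" for b k v
    using periodic[of b k "v - ?\<Omega>"] that by (simp add: algebra_simps)
  show ?thesis
  proof (cases X)
    case (A2odd r)
    then have "f b k (v + 2 * ?\<Omega>) = f b k v" "f r k (v + ?\<Omega>) = f r k v" for b k v
      by (auto intro!: shift simp: period_eq)
    with valid a A2odd show ?thesis
      by (auto simp: period_eq ac_simps)
  next
    case (A2even r)
    then have "f b k (v + 2 * ?\<Omega>) = f b k v" for b k v
      by (auto intro!: shift simp: period_eq)
    moreover have "f b k (3 * ?\<Omega> + v) = f b k (v + ?\<Omega>)" for b k v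
      using calculation[of b k "v + ?\<Omega>"] by (simp add: algebra_simps)
    ultimately show ?thesis
      using valid a A2even by (auto simp: period_eq ac_simps)
  next
    case (D2 r)
    then have "f b k (v + 2 * ?\<Omega>) = f b k v" "f b k (2 * ?\<Omega> + v) = f b k v" "b < r \<Longrightarrow> f b k (v + ?\<Omega>) = f b k v" for b k v
      by (auto intro!: shift simp: period_eq)
    with valid a D2 show ?thesis
      by (auto simp: period_eq mult.commute)
  next
    case E6_2
    then have "f b k (v + 2 * ?\<Omega>) = f b k v" "f b k (2 * ?\<Omega> + v) = f b k v" "2 < b \<Longrightarrow> f b k (v + ?\<Omega>) = f b k v" for b k v
      by (auto intro!: shift simp: period_eq)
    with a E6_2 show ?thesis
      by (auto simp: period_eq mult.commute)
  next
    case D4_3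
    then have "f 2 k (v + ?\<Omega>) = f 2 k v" "f 1 k (2 * ?\<Omega> + v) = f 1 k (v - ?\<Omega>)" for k v
      using shift(1)[of 2 "?\<Omega>" k v] thrice[of 1 k v] by (simp_all add: period_eq)
    moreover have "f 2 k (v + 3 * ?\<Omega>) = f 2 k v" for k v
      using calculation(1)[of k v] calculation(1)[of k "v + ?\<Omega>"] calculation(1)[of k "v + 2 * ?\<Omega>"]
      by (simp add: algebra_simps)
    ultimately show ?thesis
      using a D4_3 by (auto simp: period_eq mult.commute)
  qed
qed

text \<open>Evaluating \<open>f\<close> at canonical representatives makes it literally periodic.\<close>

lemma rel_cong_Mexpr_periodic:
  assumes "a \<in> I_sigma X"
    and "\<And>b k v. R \<turnstile> f b k (v + period X h b) \<approx> f b k v"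
  shows "R \<turnstile> Mexpr X h f a m (u + period X h a) \<approx> Mexpr X h f a m u"
proof -
  define f' where "f' b k v = f b k (period_rep (period X h b) v)" for b k v
  have f': "R \<turnstile> f' b k v \<approx> f b k v" for b k v
    unfolding f'_def by (rule rel_cong_period_rep) (rule assms(2))
  have "R \<turnstile> Mexpr X h f a m (u + period X h a) \<approx> Mexpr X h f' a m (u + period X h a)"
    by (rule rel_cong_Mexpr) (rule rel_cong_sym[OF f'])
  also have "Mexpr X h f' a m (u + period X h a) = Mexpr X h f' a m u"
    by (rule Mexpr_periodic[OF assms(1)]) (simp add: f'_def period_rep_add_period)
  also have "R \<turnstile> \<dots> \<approx> Mexpr X h f a m u"
    by (rule rel_cong_Mexpr) (rule f')
  finally show ?thesis .
qed

section \<open>The map \<open>\<phi>\<close>\<close>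

lemma Tval_mult_Tinvval:
  "b = 0 \<or> k = 0 \<or> valid_idx X b k \<Longrightarrow> Trels X h \<turnstile> Tval b k v * Tinvval b k v \<approx> 1"
  by (auto simp: Tval_def Tinvval_def Trels_def intro!: rel_cong_relator)

lemma Tval_periodic: "Trels X h \<turnstile> Tval b k (v + period X h b) \<approx> Tval b k v"
proof -
  have "var (TG b k v) - var (TG b k (v + period X h b)) \<in> Trels X h"
    unfolding Trels_def by blast
  then show ?thesis
    by (auto simp: Tval_def intro: rel_cong_sym[OF rel_cong_relator])
qed

lemma Tinvval_periodic: "Trels X h \<turnstile> Tinvval b k (v + period X h b) \<approx> Tinvval b k v"
proof -
  have "var (TI b k v) - var (TI b k (v + period X h b)) \<in> Trels X h"
    unfolding Trels_def by blast
  then show ?thesis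
    by (auto simp: Tinvval_def intro: rel_cong_sym[OF rel_cong_relator])
qed

lemma T_system:
  "valid_idx X a m \<Longrightarrow> Trels X h \<turnstile> Tval a m (u - 1) * Tval a m (u + 1)
                                    \<approx> Tval a (m - 1) u * Tval a (m + 1) u + Mexpr X h Tval a m u"
  by (rule rel_cong_relator) (unfold Trels_def, blast)

lemma Mexpr_Tval_mult_Tinvval:
  assumes "a \<in> I_sigma X"
  shows "Trels X h \<turnstile> Mexpr X h Tval a m u * Mexpr X h Tinvval a m u \<approx> 1"
proof -
  have "Trels X h \<turnstile> Mexpr X h (\<lambda>b k v. Tval b k v * Tinvval b k v) a m u \<approx> Mexpr X h (\<lambda>b k v. 1) a m u"
    by (rule rel_cong_Mexpr_nodes[OF assms]) (auto intro: Tval_mult_Tinvval simp: valid_idx_def)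
  then show ?thesis
    by (simp add: Mexpr_mult Mexpr_one)
qed

text \<open>\<open>(1 + Y)\<^sup>-\<^sup>1\<close> goes to \<open>T\<^sub>m\<^sub>-\<^sub>1 T\<^sub>m\<^sub>+\<^sub>1 / (T\<^sub>m(u - 1) T\<^sub>m(u + 1))\<close>,
  the inverse of \<open>1 + \<phi>(Y)\<close> by the T-system.\<close>

fun phi_gen :: "ygen \<Rightarrow> tgen zpoly" where
  "phi_gen (YG a m u) = (if valid_idx X a m then phi_img X h a m u else 0)"
| "phi_gen (YI a m u) = (if valid_idx X a m
      then Mexpr X h Tinvval a m u * Tval a (m - 1) u * Tval a (m + 1) u else 0)"
| "phi_gen (YW a m u) = (if valid_idx X a m
      then Tval a (m - 1) u * Tval a (m + 1) u * Tinvval a m (u - 1) * Tinvval a m (u + 1) else 0)"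

lemma phi_YG_mult_YI:
  assumes "valid_idx X a m"
  shows "Trels X h \<turnstile> poly_subst phi_gen (var (YG a m u) * var (YI a m u)) \<approx> 1"
proof -
  have "poly_subst phi_gen (var (YG a m u) * var (YI a m u))
          = (Mexpr X h Tval a m u * Mexpr X h Tinvval a m u)
            * (Tval a (m - 1) u * Tinvval a (m - 1) u) * (Tval a (m + 1) u * Tinvval a (m + 1) u)"
    using assms by (simp add: phi_img_def ac_simps)
  also have "Trels X h \<turnstile> \<dots> \<approx> 1 * 1 * 1"
    using assms by (intro rel_cong_mult Mexpr_Tval_mult_Tinvval Tval_mult_Tinvval) (auto simp: valid_idx_def)
  finally show ?thesis by simp
qed

lemma phi_one_plus_YG_mult_YW:
  assumes "valid_idx X a m"
  shows "Trels X h \<turnstile> poly_subst phi_gen ((1 + var (YG a m u)) * var (YW a m u)) \<approx> 1"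
proof -
  let ?T = "Tval a (m - 1) u * Tval a (m + 1) u"
  let ?J = "Tinvval a m (u - 1) * Tinvval a m (u + 1)"
  have "poly_subst phi_gen ((1 + var (YG a m u)) * var (YW a m u))
          = (?T + Mexpr X h Tval a m u * (Tval a (m - 1) u * Tinvval a (m - 1) u)
                                         * (Tval a (m + 1) u * Tinvval a (m + 1) u)) * ?J"
    using assms by (simp add: phi_img_def algebra_simps)
  also have "Trels X h \<turnstile> \<dots> \<approx> (?T + Mexpr X h Tval a m u * 1 * 1) * ?J"
    using assms by (intro rel_cong_mult rel_cong_add Tval_mult_Tinvval) (auto simp: valid_idx_def)
  also have "\<dots> = (Tval a (m - 1) u * Tval a (m + 1) u + Mexpr X h Tval a m u) * ?J"
    by simp
  also have "Trels X h \<turnstile> \<dots> \<approx> (Tval a m (u - 1) * Tval a m (u + 1)) * ?J"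
    by (rule rel_cong_mult[OF rel_cong_sym[OF T_system[OF assms]] rel_cong_refl])
  also have "\<dots> = (Tval a m (u - 1) * Tinvval a m (u - 1)) * (Tval a m (u + 1) * Tinvval a m (u + 1))"
    by (simp add: ac_simps)
  also have "Trels X h \<turnstile> \<dots> \<approx> 1 * 1"
    using assms by (intro rel_cong_mult Tval_mult_Tinvval) auto
  finally show ?thesis by simp
qed

lemma phi_gen_periodic:
  "Trels X h \<turnstile> phi_gen (YG a m (u + period X h a)) \<approx> phi_gen (YG a m u)"
  "Trels X h \<turnstile> phi_gen (YI a m (u + period X h a)) \<approx> phi_gen (YI a m u)"
  "Trels X h \<turnstile> phi_gen (YW a m (u + period X h a)) \<approx> phi_gen (YW a m u)"
proof -
  have shifts: "u + period X h a - 1 = (u - 1) + period X h a" "u + period X h a + 1 = (u + 1) + period X h a"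
    by (simp_all add: algebra_simps)
  show "Trels X h \<turnstile> phi_gen (YG a m (u + period X h a)) \<approx> phi_gen (YG a m u)"
    "Trels X h \<turnstile> phi_gen (YI a m (u + period X h a)) \<approx> phi_gen (YI a m u)"
    "Trels X h \<turnstile> phi_gen (YW a m (u + period X h a)) \<approx> phi_gen (YW a m u)"
    by (auto simp: phi_img_def valid_idx_def shifts
        intro!: rel_cong_mult rel_cong_Mexpr_periodic Tval_periodic Tinvval_periodic)
qed

lemma phi_one_plus_Yval:
  assumes "b = 0 \<or> b \<in> I_sigma X" "1 \<le> k"
  shows "Trels X h \<turnstile> 1 + poly_subst phi_gen (Yval b k v)
           \<approx> Tval b k (v - 1) * Tval b k (v + 1) * Tinvval b (k - 1) v * Tinvval b (k + 1) v"
  using assms(1)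
proof
  assume b: "b \<in> I_sigma X"
  then have valid_b: "valid_idx X b k"
    using assms(2) by (simp add: valid_idx_def)
  have "1 + poly_subst phi_gen (Yval b k v)
          = 1 + Mexpr X h Tval b k v * Tinvval b (k - 1) v * Tinvval b (k + 1) v"
    using valid_b b assms(2) by (auto simp: Yval_def phi_img_def)
  also have "Trels X h \<turnstile> \<dots> \<approx> (Tval b (k - 1) v * Tinvval b (k - 1) v) * (Tval b (k + 1) v * Tinvval b (k + 1) v)
                             + Mexpr X h Tval b k v * Tinvval b (k - 1) v * Tinvval b (k + 1) v"
  proof -
    have "Trels X h \<turnstile> (Tval b (k - 1) v * Tinvval b (k - 1) v) * (Tval b (k + 1) v * Tinvval b (k + 1) v) \<approx> 1 * 1"
      using valid_b by (intro rel_cong_mult Tval_mult_Tinvval) (auto simp: valid_idx_def)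
    then show ?thesis
      using rel_cong_add[OF rel_cong_sym rel_cong_refl] by simp
  qed
  also have "\<dots> = (Tval b (k - 1) v * Tval b (k + 1) v + Mexpr X h Tval b k v)
                     * Tinvval b (k - 1) v * Tinvval b (k + 1) v"
    by (simp add: algebra_simps)
  also have "Trels X h \<turnstile> \<dots> \<approx> Tval b k (v - 1) * Tval b k (v + 1) * Tinvval b (k - 1) v * Tinvval b (k + 1) v"
    by (rule rel_cong_mult[OF rel_cong_mult[OF rel_cong_sym[OF T_system[OF valid_b]] rel_cong_refl] rel_cong_refl])
  finally show ?thesis .
qed (simp add: Yval_def Tval_def Tinvval_def)

lemma phi_Yfac:
  assumes "a \<in> I_sigma X"
  shows "Trels X h \<turnstile> poly_subst phi_gen (Yfac a k u)
           \<approx> Mexpr X h Tval a k u * Tinvval a k (u - 1) * Tinvval a k (u + 1)"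
proof (cases "k = 0")
  case True
  have "Mexpr X h Tval a 0 u = 1"
    using Mexpr_level[of X h Tval a 0 u 0] by (simp add: Tval_def Mexpr_one)
  with True show ?thesis
    by (simp add: Yfac_def Tinvval_def)
next
  case False
  then have valid_k: "valid_idx X a k"
    using assms by (simp add: valid_idx_def)
  have "poly_subst phi_gen (Yfac a k u)
          = Mexpr X h Tval a k u * Tinvval a k (u - 1) * Tinvval a k (u + 1)
            * (Tval a (k - 1) u * Tinvval a (k - 1) u) * (Tval a (k + 1) u * Tinvval a (k + 1) u)"
    using False valid_k by (simp add: Yfac_def phi_img_def ac_simps)
  also have "Trels X h \<turnstile> \<dots> \<approx> Mexpr X h Tval a k u * Tinvval a k (u - 1) * Tinvval a k (u + 1) * 1 * 1"
    using valid_k by (intro rel_cong_mult Tval_mult_Tinvval) (auto simp: valid_idx_def)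
  finally show ?thesis by simp
qed

lemma phi_Y_system:
  assumes "valid_idx X a m"
  shows "Trels X h \<turnstile> poly_subst phi_gen (var (YG a m (u - 1)) * var (YG a m (u + 1)))
           \<approx> poly_subst phi_gen (Mexpr X h (\<lambda>b k v. 1 + Yval b k v) a m u
                                  * Yfac a (m - 1) u * Yfac a (m + 1) u)"
proof -
  have a: "a \<in> I_sigma X" and m: "1 \<le> m"
    using assms by (auto simp: valid_idx_def)
  let ?M = "\<lambda>k w. Mexpr X h Tval a k w" and ?Mi = "\<lambda>k. Mexpr X h Tinvval a k u"
  let ?J = "\<lambda>k. Tinvval a k (u - 1) * Tinvval a k (u + 1)"
  have "poly_subst phi_gen (Mexpr X h (\<lambda>b k v. 1 + Yval b k v) a m u)
          = Mexpr X h (\<lambda>b k v. 1 + poly_subst phi_gen (Yval b k v)) a m u"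
    by (simp add: Mexpr_hom)
  also have "Trels X h \<turnstile> \<dots> \<approx> Mexpr X h (\<lambda>b k v. Tval b k (v - 1) * Tval b k (v + 1)
                                          * Tinvval b (k - 1) v * Tinvval b (k + 1) v) a m u"
    by (rule rel_cong_Mexpr_nodes[OF a]) (rule phi_one_plus_Yval[OF _ m])
  also have "\<dots> = ?M m (u - 1) * ?M m (u + 1) * ?Mi (m - 1) * ?Mi (m + 1)"
    by (simp add: Mexpr_mult Mexpr_shift Mexpr_shift_diff
        Mexpr_reindex_level[of X h Tinvval "\<lambda>k. k - Suc 0"] Mexpr_reindex_level[of X h Tinvval Suc])
  finally have N: "Trels X h \<turnstile> poly_subst phi_gen (Mexpr X h (\<lambda>b k v. 1 + Yval b k v) a m u)
                     \<approx> ?M m (u - 1) * ?M m (u + 1) * ?Mi (m - 1) * ?Mi (m + 1)" .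
  have "Trels X h \<turnstile> poly_subst phi_gen (Mexpr X h (\<lambda>b k v. 1 + Yval b k v) a m u
                                  * Yfac a (m - 1) u * Yfac a (m + 1) u)
          \<approx> (?M m (u - 1) * ?M m (u + 1) * ?Mi (m - 1) * ?Mi (m + 1))
             * (?M (m - 1) u * Tinvval a (m - 1) (u - 1) * Tinvval a (m - 1) (u + 1))
             * (?M (m + 1) u * Tinvval a (m + 1) (u - 1) * Tinvval a (m + 1) (u + 1))"
    unfolding poly_subst_mult by (intro rel_cong_mult N phi_Yfac[OF a])
  also have "\<dots> = ?M m (u - 1) * ?M m (u + 1) * ?J (m - 1) * ?J (m + 1)
                     * (?M (m - 1) u * ?Mi (m - 1)) * (?M (m + 1) u * ?Mi (m + 1))"
    by (simp add: ac_simps)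
  also have "Trels X h \<turnstile> \<dots> \<approx> ?M m (u - 1) * ?M m (u + 1) * ?J (m - 1) * ?J (m + 1) * 1 * 1"
    by (intro rel_cong_mult Mexpr_Tval_mult_Tinvval a rel_cong_refl)
  also have "\<dots> = poly_subst phi_gen (var (YG a m (u - 1)) * var (YG a m (u + 1)))"
    using assms by (simp add: phi_img_def ac_simps)
  finally show ?thesis
    by (rule rel_cong_sym)
qed

lemma phi_respects_rels: "respects_rels phi_gen (Yrels X h) (Trels X h)"
  unfolding respects_rels_def Yrels_def
  by (intro ballI, elim UnE CollectE exE conjE;
      simp only: poly_subst_diff poly_subst_one poly_subst_var rel_cong_zero_iff)
     (assumption | rule phi_YG_mult_YI phi_one_plus_YG_mult_YW phi_Y_system rel_cong_sym[OF phi_gen_periodic(1)]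
          rel_cong_sym[OF phi_gen_periodic(2)] rel_cong_sym[OF phi_gen_periodic(3)] | simp)+

end

section \<open>Levels of spectral parameters\<close>

locale irrational_step =
  fixes h :: complex
  assumes h_irrational: "\<forall>q\<in>\<rat>. h \<noteq> 2 * pi * \<i> * q"
begin

lemma h_nonzero: "h \<noteq> 0"
  using h_irrational by (metis Rats_0 mult_zero_right)

definition rat_step :: complex where
  "rat_step = 2 * pi * \<i> / h"

definition step_lattice :: "complex set" where
  "step_lattice = {of_int n + of_rat q * rat_step | n q. True}"

definition coset_rep :: "complex \<Rightarrow> complex" where
  "coset_rep u = (SOME w. u - w \<in> step_lattice)"

text \<open>The integer coordinate of \<open>u\<close> relative to a fixed representative of \<open>u + step_lattice\<close>;
  well defined because \<open>\<int> \<inter> \<rat> rat_step = {0}\<close> by irrationality of \<open>h\<close>.\<close>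

definition level :: "complex \<Rightarrow> int" where
  "level u = (SOME n. \<exists>q. u - coset_rep u = of_int n + of_rat q * rat_step)"

lemma step_lattice_int_part_unique:
  assumes "of_int n + of_rat q * rat_step = of_int n' + of_rat q' * rat_step"
  shows "n = n'"
proof (rule ccontr)
  assume "n \<noteq> n'"
  then have "q \<noteq> q'"
    using assms by auto
  have "of_rat (q - q') * rat_step = of_rat (of_int (n' - n))"
    using assms by (simp add: of_rat_diff algebra_simps)
  then have "h = 2 * pi * \<i> * of_rat ((q - q') / of_int (n' - n))"
    using h_nonzero \<open>n \<noteq> n'\<close> \<open>q \<noteq> q'\<close>
    by (auto simp: rat_step_def of_rat_divide field_simps)
  then show False
    using h_irrational Rats_of_rat by blast
qed

lemma step_lattice_add:
  assumes "x \<in> step_lattice" "y \<in> step_lattice"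
  shows "x + y \<in> step_lattice" "x - y \<in> step_lattice"
proof -
  obtain n q n' q' where "x = of_int n + of_rat q * rat_step" "y = of_int n' + of_rat q' * rat_step"
    using assms unfolding step_lattice_def by blast
  then have "x + y = of_int (n + n') + of_rat (q + q') * rat_step"
    "x - y = of_int (n - n') + of_rat (q - q') * rat_step"
    by (simp_all add: of_rat_add of_rat_diff algebra_simps)
  then show "x + y \<in> step_lattice" "x - y \<in> step_lattice"
    unfolding step_lattice_def by blast+
qed

lemma coset_rep_add:
  assumes "x \<in> step_lattice"
  shows "coset_rep (u + x) = coset_rep u"
proof -
  have "u + x - w \<in> step_lattice \<longleftrightarrow> u - w \<in> step_lattice" for w
    using step_lattice_add[OF _ assms, of "u - w"] step_lattice_add(2)[of "u + x - w" x] assms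
    by (auto simp: algebra_simps)
  then show ?thesis
    unfolding coset_rep_def by simp
qed

lemma level_eq:
  assumes "u - coset_rep u = of_int n + of_rat q * rat_step"
  shows "level u = n"
proof -
  have "\<exists>q. u - coset_rep u = of_int (level u) + of_rat q * rat_step"
    unfolding level_def by (rule someI_ex) (use assms in blast)
  with assms show ?thesis
    using step_lattice_int_part_unique by metis
qed

lemma level_add:
  assumes "x = of_int k + of_rat s * rat_step"
  shows "level (u + x) = level u + k"
proof -
  have "x \<in> step_lattice"
    using assms unfolding step_lattice_def by blast
  have "u - coset_rep u \<in> step_lattice"
    unfolding coset_rep_def
    by (rule someI[of _ u]) (auto simp: step_lattice_def intro: exI[of _ 0])
  then obtain n q where nq: "u - coset_rep u = of_int n + of_rat q * rat_step"
    by (auto simp: step_lattice_def)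
  then have "u + x - coset_rep (u + x) = of_int (n + k) + of_rat (q + s) * rat_step"
    using assms coset_rep_add[OF \<open>x \<in> step_lattice\<close>] by (simp add: of_rat_add algebra_simps)
  then have "level (u + x) = n + k"
    by (rule level_eq)
  then show ?thesis
    using level_eq[OF nq] by simp
qed

lemma level_add_one [simp]: "level (u + 1) = level u + 1"
  and level_diff_one [simp]: "level (u - 1) = level u - 1"
  using level_add[of 1 1 0 u] level_add[of "- 1" "- 1" 0 u] by simp_all

lemma level_add_rat_step: "level (u + of_rat s * rat_step) = level u"
  using level_add[of _ 0 s u] by simp

end

section \<open>The map \<open>\<psi>\<close>\<close>

locale twisted_irrational = irrational_step +
  fixes X :: twisted_type
  assumes valid_X: "valid_twisted X"
begin

sublocale twisted X h
  using valid_X h_nonzero by unfold_locales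

lemma level_add_Omega [simp]: "level (u + Omega X h) = level u"
  and level_diff_Omega [simp]: "level (u - Omega X h) = level u"
proof -
  have "Omega X h = of_rat (1 / of_nat (kappa X)) * rat_step"
    by (simp add: Omega_def rat_step_def of_rat_divide field_simps)
  then show "level (u + Omega X h) = level u" "level (u - Omega X h) = level u"
    using level_add_rat_step[of u] level_add_rat_step[of u "- (1 / of_nat (kappa X))"]
    by (simp_all add: of_rat_minus)
qed

lemma level_add_period [simp]: "level (u + period X h a) = level u"
proof -
  have "period X h a = of_rat (1 / of_nat (kappa_a X a)) * rat_step"
    by (simp add: period_def rat_step_def of_rat_divide field_simps)
  then show ?thesis
    using level_add_rat_step by simp
qed

lemma YG_mult_YI: "valid_idx X a m \<Longrightarrow> Yrels X h \<turnstile> var (YG a m u) * var (YI a m u) \<approx> 1"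
  by (rule rel_cong_relator) (unfold Yrels_def Un_iff, fast)

lemma one_plus_YG_mult_YW:
  "valid_idx X a m \<Longrightarrow> Yrels X h \<turnstile> (1 + var (YG a m u)) * var (YW a m u) \<approx> 1"
  by (rule rel_cong_relator) (unfold Yrels_def Un_iff, fast)

lemma Y_gens_periodic:
  "Yrels X h \<turnstile> var (YG a m (v + period X h a)) \<approx> var (YG a m v)"
  "Yrels X h \<turnstile> var (YI a m (v + period X h a)) \<approx> var (YI a m v)"
  "Yrels X h \<turnstile> var (YW a m (v + period X h a)) \<approx> var (YW a m v)"
  by (rule rel_cong_sym, rule rel_cong_relator, unfold Yrels_def Un_iff, fast)+

lemma Y_gens_invalid:
  assumes "\<not> valid_idx X a m"
  shows "Yrels X h \<turnstile> var (YG a m u) \<approx> 0" "Yrels X h \<turnstile> var (YI a m u) \<approx> 0"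
    "Yrels X h \<turnstile> var (YW a m u) \<approx> 0"
proof -
  have "var (YG a m u) \<in> Yrels X h" "var (YI a m u) \<in> Yrels X h" "var (YW a m u) \<in> Yrels X h"
    using assms unfolding Yrels_def Un_iff by fast+
  then show "Yrels X h \<turnstile> var (YG a m u) \<approx> 0" "Yrels X h \<turnstile> var (YI a m u) \<approx> 0"
    "Yrels X h \<turnstile> var (YW a m u) \<approx> 0"
    by (simp_all add: rel_cong_relator_zero)
qed

lemma Y_system:
  "valid_idx X a m \<Longrightarrow> Yrels X h \<turnstile> var (YG a m (u - 1)) * var (YG a m (u + 1))
      \<approx> Mexpr X h (\<lambda>b k v. 1 + Yval b k v) a m u * Yfac a (m - 1) u * Yfac a (m + 1) u"
  by (rule rel_cong_relator) (unfold Yrels_def Un_iff, fast)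

lemma Yfac_mult_Y_ratio:
  assumes "valid_idx X a k"
  shows "Yrels X h \<turnstile> Yfac a k u * ((1 + var (YG a k u)) * var (YI a k u)) \<approx> 1"
proof -
  have "Yrels X h \<turnstile> ((1 + var (YG a k u)) * var (YW a k u)) * (var (YG a k u) * var (YI a k u)) \<approx> 1 * 1"
    using assms by (intro rel_cong_mult one_plus_YG_mult_YW YG_mult_YI)
  then show ?thesis
    using assms by (simp add: Yfac_def valid_idx_def ac_simps)
qed

text \<open>Families of units of the Y-ring, indexed by node and spectral parameter, each stored together
  with its inverse.\<close>

type_synonym unit_family = "nat \<Rightarrow> complex \<Rightarrow> ygen zpoly \<times> ygen zpoly"

definition periodic_units :: "unit_family \<Rightarrow> bool" where
  "periodic_units S \<longleftrightarrow> (\<forall>a\<in>I_sigma X. \<forall>u.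
      Yrels X h \<turnstile> fst (S a u) * snd (S a u) \<approx> 1
    \<and> Yrels X h \<turnstile> fst (S a (u + period X h a)) \<approx> fst (S a u)
    \<and> Yrels X h \<turnstile> snd (S a (u + period X h a)) \<approx> snd (S a u))"

definition one_units :: unit_family where
  "one_units = (\<lambda>a u. (1, 1))"

lemma periodic_units_one: "periodic_units one_units"
  by (simp add: periodic_units_def one_units_def)

definition node_val :: "unit_family \<Rightarrow> nat \<Rightarrow> nat \<Rightarrow> complex \<Rightarrow> ygen zpoly" where
  "node_val S b k v = (if b = 0 then 1 else if b \<in> I_sigma X then fst (S b v) else 0)"

definition node_inv :: "unit_family \<Rightarrow> nat \<Rightarrow> nat \<Rightarrow> complex \<Rightarrow> ygen zpoly" where
  "node_inv S b k v = (if b = 0 then 1 else if b \<in> I_sigma X then snd (S b v) else 0)"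

lemma Mexpr_node_val_periodic:
  assumes "periodic_units S" "a \<in> I_sigma X"
  shows "Yrels X h \<turnstile> Mexpr X h (node_val S) a m (u + period X h a) \<approx> Mexpr X h (node_val S) a m u"
    "Yrels X h \<turnstile> Mexpr X h (node_inv S) a m (u + period X h a) \<approx> Mexpr X h (node_inv S) a m u"
  using assms by (auto intro!: rel_cong_Mexpr_periodic simp: node_val_def node_inv_def periodic_units_def)

lemma Mexpr_node_val_mult_inv:
  assumes "periodic_units S" "a \<in> I_sigma X"
  shows "Yrels X h \<turnstile> Mexpr X h (node_val S) a m u * Mexpr X h (node_inv S) a m u \<approx> 1"
proof -
  have "Yrels X h \<turnstile> Mexpr X h (\<lambda>b k v. node_val S b k v * node_inv S b k v) a m u \<approx> Mexpr X h (\<lambda>b k v. 1) a m u"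
    by (rule rel_cong_Mexpr_nodes[OF assms(2)])
       (use assms(1) in \<open>auto simp: node_val_def node_inv_def periodic_units_def\<close>)
  then show ?thesis
    by (simp add: Mexpr_mult Mexpr_one)
qed

text \<open>\<open>Y_ratio a u\<close> is \<open>(1 + Y\<^sub>1(u)) / Y\<^sub>1(u)\<close> with its inverse; the level one
  T-system to be solved reads \<open>T\<^sub>1(u - 1) T\<^sub>1(u + 1) = M\<^sub>1(u) Y_ratio(u)\<close>.\<close>

definition Y_ratio :: "nat \<Rightarrow> complex \<Rightarrow> ygen zpoly \<times> ygen zpoly" where
  "Y_ratio a u = ((1 + var (YG a 1 u)) * var (YI a 1 u), var (YG a 1 u) * var (YW a 1 u))"

lemma Y_ratio_mult_inv:
  "a \<in> I_sigma X \<Longrightarrow> Yrels X h \<turnstile> fst (Y_ratio a u) * snd (Y_ratio a u) \<approx> 1"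
  using Yfac_mult_Y_ratio[of a 1 u] by (simp add: Y_ratio_def Yfac_def valid_idx_def ac_simps)

lemma Y_ratio_periodic:
  "Yrels X h \<turnstile> fst (Y_ratio a (u + period X h a)) \<approx> fst (Y_ratio a u)"
  "Yrels X h \<turnstile> snd (Y_ratio a (u + period X h a)) \<approx> snd (Y_ratio a u)"
  by (auto simp: Y_ratio_def intro!: rel_cong_mult rel_cong_add Y_gens_periodic)

text \<open>One step of solving the level one T-system in direction \<open>d = \<plusminus>1\<close>: the values at
  \<open>u\<close> are computed from those of \<open>S1\<close> around \<open>u - d\<close> and of \<open>S0\<close> at \<open>u - 2d\<close>.\<close>

definition level_one_step :: "complex \<Rightarrow> unit_family \<Rightarrow> unit_family \<Rightarrow> unit_family" where
  "level_one_step d S0 S1 = (\<lambda>a u.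
     (Mexpr X h (node_val S1) a 1 (u - d) * fst (Y_ratio a (u - d)) * snd (S0 a (u - 2 * d)),
      Mexpr X h (node_inv S1) a 1 (u - d) * snd (Y_ratio a (u - d)) * fst (S0 a (u - 2 * d))))"

lemma periodic_units_level_one_step:
  assumes "periodic_units S0" "periodic_units S1"
  shows "periodic_units (level_one_step d S0 S1)"
  unfolding periodic_units_def
proof (intro ballI allI conjI)
  fix a u
  assume a: "a \<in> I_sigma X"
  have shifts: "u + period X h a - c = (u - c) + period X h a" for c
    by simp
  show "Yrels X h \<turnstile> fst (level_one_step d S0 S1 a u) * snd (level_one_step d S0 S1 a u) \<approx> 1"
  proof -
    have "fst (level_one_step d S0 S1 a u) * snd (level_one_step d S0 S1 a u)
            = (Mexpr X h (node_val S1) a 1 (u - d) * Mexpr X h (node_inv S1) a 1 (u - d))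
              * (fst (Y_ratio a (u - d)) * snd (Y_ratio a (u - d)))
              * (fst (S0 a (u - 2 * d)) * snd (S0 a (u - 2 * d)))"
      by (simp add: level_one_step_def ac_simps)
    also have "Yrels X h \<turnstile> \<dots> \<approx> 1 * 1 * 1"
      using assms a by (intro rel_cong_mult Mexpr_node_val_mult_inv Y_ratio_mult_inv)
        (auto simp: periodic_units_def)
    finally show ?thesis by simp
  qed
  show "Yrels X h \<turnstile> fst (level_one_step d S0 S1 a (u + period X h a)) \<approx> fst (level_one_step d S0 S1 a u)"
    "Yrels X h \<turnstile> snd (level_one_step d S0 S1 a (u + period X h a)) \<approx> snd (level_one_step d S0 S1 a u)"
    using assms a unfolding level_one_step_def shifts
    by (auto intro!: rel_cong_mult Mexpr_node_val_periodic Y_ratio_periodic simp: periodic_units_def)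
qed

lemma level_one_step_solves:
  assumes "periodic_units S0" "a \<in> I_sigma X"
  shows "Yrels X h \<turnstile> fst (S0 a (w - d)) * fst (level_one_step d S0 S1 a (w + d))
           \<approx> Mexpr X h (node_val S1) a 1 w * fst (Y_ratio a w)"
proof -
  have "fst (S0 a (w - d)) * fst (level_one_step d S0 S1 a (w + d))
          = Mexpr X h (node_val S1) a 1 w * fst (Y_ratio a w) * (fst (S0 a (w - d)) * snd (S0 a (w - d)))"
    by (simp add: level_one_step_def algebra_simps)
  also have "Yrels X h \<turnstile> \<dots> \<approx> Mexpr X h (node_val S1) a 1 w * fst (Y_ratio a w) * 1"
    using assms by (intro rel_cong_mult rel_cong_refl) (auto simp: periodic_units_def)
  finally show ?thesis by simp
qed

fun level_one_slices :: "complex \<Rightarrow> nat \<Rightarrow> unit_family" where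
  "level_one_slices d 0 = one_units"
| "level_one_slices d (Suc 0) = one_units"
| "level_one_slices d (Suc (Suc n)) = level_one_step d (level_one_slices d n) (level_one_slices d (Suc n))"

text \<open>\<open>slice t\<close> gives \<open>T\<^sub>1\<close> on the parameters of level \<open>t\<close>: it is \<open>1\<close> for \<open>t \<in> {0, 1}\<close>
  and is propagated forwards for \<open>t > 1\<close> and backwards for \<open>t < 0\<close>.\<close>

definition slice :: "int \<Rightarrow> unit_family" where
  "slice t = (if 0 \<le> t then level_one_slices 1 (nat t) else level_one_slices (- 1) (nat (1 - t)))"

lemma periodic_units_slice: "periodic_units (slice t)"
proof -
  have "periodic_units (level_one_slices d n)" for d n
    by (induction d n rule: level_one_slices.induct)
       (simp_all add: periodic_units_one periodic_units_level_one_step)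
  then show ?thesis
    by (simp add: slice_def)
qed

lemma slice_succ: "1 \<le> t \<Longrightarrow> slice (t + 1) = level_one_step 1 (slice (t - 1)) (slice t)"
proof -
  assume "1 \<le> t"
  then obtain n where "t = int n + 1"
    by (metis add.commute zle_iff_zadd)
  then show ?thesis
    by (simp add: slice_def nat_add_distrib)
qed

lemma slice_pred: "t \<le> 0 \<Longrightarrow> slice (t - 1) = level_one_step (- 1) (slice (t + 1)) (slice t)"
proof -
  assume "t \<le> 0"
  then obtain n where n: "t = - int n"
    by (metis add.inverse_inverse neg_0_le_iff_le nonneg_int_cases)
  have backwards: "slice (1 - int k) = level_one_slices (- 1) k" for k
    by (cases "k \<le> 1") (auto simp: slice_def le_Suc_eq)
  have "t - 1 = 1 - int (Suc (Suc n))" "t + 1 = 1 - int n" "t = 1 - int (Suc n)"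
    using n by simp_all
  then show ?thesis
    by (simp only: backwards level_one_slices.simps)
qed

definition level_one_solution :: unit_family where
  "level_one_solution = (\<lambda>a u. slice (level u) a u)"

lemma periodic_units_level_one_solution: "periodic_units level_one_solution"
  using periodic_units_slice by (simp add: periodic_units_def level_one_solution_def)

lemma Mexpr_level_one_solution:
  "Mexpr X h (node_val (slice (level w))) a m w = Mexpr X h (node_val level_one_solution) a m w"
  by (rule Mexpr_local) (simp_all add: node_val_def level_one_solution_def)

text \<open>On levels \<open>\<ge> 1\<close> the value at \<open>w + 1\<close> was computed forwards from \<open>w - 1\<close>, on the
  others the value at \<open>w - 1\<close> was computed backwards from \<open>w + 1\<close>.\<close>

lemma level_one_solution_solves:
  assumes "a \<in> I_sigma X"
  shows "Yrels X h \<turnstile> fst (level_one_solution a (w - 1)) * fst (level_one_solution a (w + 1))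
           \<approx> Mexpr X h (node_val level_one_solution) a 1 w * fst (Y_ratio a w)"
proof (cases "1 \<le> level w")
  case True
  then show ?thesis
    using level_one_step_solves[OF periodic_units_slice assms, of "level w - 1" w 1 "slice (level w)"]
    by (simp add: level_one_solution_def slice_succ Mexpr_level_one_solution)
next
  case False
  then show ?thesis
    using level_one_step_solves[OF periodic_units_slice assms, of "level w + 1" w "- 1" "slice (level w)"]
    by (simp add: level_one_solution_def slice_pred Mexpr_level_one_solution mult.commute)
qed

text \<open>\<open>T\<^sub>m\<^sub>+\<^sub>1 = M\<^sub>m / (Y\<^sub>m T\<^sub>m\<^sub>-\<^sub>1)\<close>, i.e. the definition of \<open>\<phi>(Y\<^sub>m)\<close> solved for \<open>T\<^sub>m\<^sub>+\<^sub>1\<close>.\<close>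

fun psi_units :: "nat \<Rightarrow> unit_family" where
  "psi_units 0 = one_units"
| "psi_units (Suc 0) = level_one_solution"
| "psi_units (Suc (Suc m)) = (\<lambda>a u.
     (Mexpr X h (node_val (psi_units (Suc m))) a (Suc m) u * var (YI a (Suc m) u) * snd (psi_units m a u),
      Mexpr X h (node_inv (psi_units (Suc m))) a (Suc m) u * var (YG a (Suc m) u) * fst (psi_units m a u)))"

lemma periodic_units_psi_units: "periodic_units (psi_units m)"
proof (induction m rule: psi_units.induct)
  case (3 m)
  let ?S = "psi_units (Suc m)" and ?S' = "psi_units (Suc (Suc m))"
  show ?case
    unfolding periodic_units_def
  proof (intro ballI allI conjI)
    fix a u
    assume a: "a \<in> I_sigma X"
    then have valid: "valid_idx X a (Suc m)"
      by (simp add: valid_idx_def)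
    have "fst (?S' a u) * snd (?S' a u)
            = (Mexpr X h (node_val ?S) a (Suc m) u * Mexpr X h (node_inv ?S) a (Suc m) u)
              * (var (YG a (Suc m) u) * var (YI a (Suc m) u)) * (fst (psi_units m a u) * snd (psi_units m a u))"
      by (simp add: ac_simps)
    also have "Yrels X h \<turnstile> \<dots> \<approx> 1 * 1 * 1"
      using 3 a valid by (intro rel_cong_mult Mexpr_node_val_mult_inv YG_mult_YI)
        (auto simp: periodic_units_def)
    finally show "Yrels X h \<turnstile> fst (?S' a u) * snd (?S' a u) \<approx> 1"
      by simp
    show "Yrels X h \<turnstile> fst (?S' a (u + period X h a)) \<approx> fst (?S' a u)"
      "Yrels X h \<turnstile> snd (?S' a (u + period X h a)) \<approx> snd (?S' a u)"
      using 3 a by (auto intro!: rel_cong_mult Mexpr_node_val_periodic Y_gens_periodic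
          simp: periodic_units_def)
  qed
qed (simp_all add: periodic_units_one periodic_units_level_one_solution)

definition psi_T :: "nat \<Rightarrow> nat \<Rightarrow> complex \<Rightarrow> ygen zpoly" where
  "psi_T b k v = (if k = 0 then 1 else node_val (psi_units k) b k v)"

definition psi_Tinv :: "nat \<Rightarrow> nat \<Rightarrow> complex \<Rightarrow> ygen zpoly" where
  "psi_Tinv b k v = (if k = 0 then 1 else node_inv (psi_units k) b k v)"

fun psi_gen :: "tgen \<Rightarrow> ygen zpoly" where
  "psi_gen (TG a m u) = (if valid_idx X a m then fst (psi_units m a u) else 0)"
| "psi_gen (TI a m u) = (if valid_idx X a m then snd (psi_units m a u) else 0)"

lemma psi_Tval: "poly_subst psi_gen (Tval b k v) = psi_T b k v"
  and psi_Tinvval: "poly_subst psi_gen (Tinvval b k v) = psi_Tinv b k v"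
  by (auto simp: Tval_def Tinvval_def psi_T_def psi_Tinv_def node_val_def node_inv_def valid_idx_def)

lemma psi_Mexpr_Tval: "poly_subst psi_gen (Mexpr X h Tval a m u) = Mexpr X h psi_T a m u"
  and psi_Mexpr_Tinvval: "poly_subst psi_gen (Mexpr X h Tinvval a m u) = Mexpr X h psi_Tinv a m u"
  by (simp_all add: Mexpr_hom psi_Tval psi_Tinvval)

lemma psi_T_mult_inv:
  "b = 0 \<or> b \<in> I_sigma X \<Longrightarrow> Yrels X h \<turnstile> psi_T b k v * psi_Tinv b k v \<approx> 1"
  using periodic_units_psi_units[of k]
  by (auto simp: psi_T_def psi_Tinv_def node_val_def node_inv_def periodic_units_def)

lemma Mexpr_psi_T_mult_inv:
  assumes "a \<in> I_sigma X"
  shows "Yrels X h \<turnstile> Mexpr X h psi_T a k u * Mexpr X h psi_Tinv a k u \<approx> 1"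
proof -
  have "Yrels X h \<turnstile> Mexpr X h (\<lambda>b k v. psi_T b k v * psi_Tinv b k v) a k u \<approx> Mexpr X h (\<lambda>b k v. 1) a k u"
    by (rule rel_cong_Mexpr_nodes[OF assms]) (rule psi_T_mult_inv)
  then show ?thesis
    by (simp add: Mexpr_mult Mexpr_one)
qed

lemma Mexpr_psi_T_level:
  assumes "1 \<le> k"
  shows "Mexpr X h psi_T a k u = Mexpr X h (node_val (psi_units k)) a k u"
    "Mexpr X h psi_Tinv a k u = Mexpr X h (node_inv (psi_units k)) a k u"
proof -
  have eqs: "psi_T b k v = node_val (psi_units k) b k v" "psi_Tinv b k v = node_inv (psi_units k) b k v"
    for b v
    using assms by (simp_all add: psi_T_def psi_Tinv_def)
  show "Mexpr X h psi_T a k u = Mexpr X h (node_val (psi_units k)) a k u"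
    using Mexpr_level[of X h psi_T a k u k] Mexpr_level[of X h "node_val (psi_units k)" a k u k]
    by (simp only: eqs)
  show "Mexpr X h psi_Tinv a k u = Mexpr X h (node_inv (psi_units k)) a k u"
    using Mexpr_level[of X h psi_Tinv a k u k] Mexpr_level[of X h "node_inv (psi_units k)" a k u k]
    by (simp only: eqs)
qed

lemma Mexpr_psi_T_zero: "Mexpr X h psi_T a 0 u = 1"
  using Mexpr_level[of X h psi_T a 0 u 0] by (simp add: psi_T_def Mexpr_one)

lemma psi_T_node:
  assumes "b \<in> I_sigma X"
  shows "psi_T b k v = fst (psi_units k b v)" "psi_Tinv b k v = snd (psi_units k b v)"
proof -
  have "b \<noteq> 0"
    using assms zero_notin_I_sigma by metis
  then show "psi_T b k v = fst (psi_units k b v)" "psi_Tinv b k v = snd (psi_units k b v)"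
    using assms by (simp_all add: psi_T_def psi_Tinv_def node_val_def node_inv_def one_units_def)
qed

lemma psi_T_succ:
  assumes "a \<in> I_sigma X" "1 \<le> m"
  shows "psi_T a (m + 1) u = Mexpr X h psi_T a m u * var (YI a m u) * psi_Tinv a (m - 1) u"
    "psi_Tinv a (m + 1) u = Mexpr X h psi_Tinv a m u * var (YG a m u) * psi_T a (m - 1) u"
proof -
  obtain k where "m = Suc k"
    using assms(2) by (cases m) auto
  then show "psi_T a (m + 1) u = Mexpr X h psi_T a m u * var (YI a m u) * psi_Tinv a (m - 1) u"
    "psi_Tinv a (m + 1) u = Mexpr X h psi_Tinv a m u * var (YG a m u) * psi_T a (m - 1) u"
    using assms by (simp_all add: psi_T_node Mexpr_psi_T_level del: psi_units.simps(2))
qed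

lemma psi_T_pred_mult_succ:
  assumes "a \<in> I_sigma X" "1 \<le> m"
  shows "Yrels X h \<turnstile> psi_T a (m - 1) u * psi_T a (m + 1) u \<approx> Mexpr X h psi_T a m u * var (YI a m u)"
proof -
  have "psi_T a (m - 1) u * psi_T a (m + 1) u
          = Mexpr X h psi_T a m u * var (YI a m u) * (psi_T a (m - 1) u * psi_Tinv a (m - 1) u)"
    using psi_T_succ[OF assms] by (simp add: ac_simps)
  also have "Yrels X h \<turnstile> \<dots> \<approx> Mexpr X h psi_T a m u * var (YI a m u) * 1"
    by (intro rel_cong_mult rel_cong_refl psi_T_mult_inv) (use assms(1) in blast)
  finally show ?thesis
    by simp
qed

definition psi_Y_relation :: "nat \<Rightarrow> nat \<Rightarrow> complex \<Rightarrow> bool" where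
  "psi_Y_relation m a u \<longleftrightarrow> Yrels X h \<turnstile> psi_T a m (u - 1) * psi_T a m (u + 1)
                                     \<approx> Mexpr X h psi_T a m u * ((1 + var (YG a m u)) * var (YI a m u))"

lemma psi_Y_relation_one: "a \<in> I_sigma X \<Longrightarrow> psi_Y_relation 1 a u"
  using level_one_solution_solves[of a u]
  by (simp add: psi_Y_relation_def psi_T_node Mexpr_psi_T_level Y_ratio_def)

lemma Mexpr_psi_T_shift_product:
  assumes "a \<in> I_sigma X" "1 \<le> m" and IH: "\<And>b v. b \<in> I_sigma X \<Longrightarrow> psi_Y_relation m b v"
  shows "Yrels X h \<turnstile> Mexpr X h psi_T a m (u - 1) * Mexpr X h psi_T a m (u + 1)
           \<approx> Mexpr X h psi_T a (m - 1) u * Mexpr X h psi_T a (m + 1) u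
              * Mexpr X h (\<lambda>b k v. 1 + Yval b k v) a m u"
proof -
  have "Mexpr X h psi_T a m (u - 1) * Mexpr X h psi_T a m (u + 1)
          = Mexpr X h (\<lambda>b k v. psi_T b k (v - 1) * psi_T b k (v + 1)) a m u"
    by (simp add: Mexpr_mult Mexpr_shift Mexpr_shift_diff)
  also have "Yrels X h \<turnstile> \<dots> \<approx> Mexpr X h (\<lambda>b k v. psi_T b (k - 1) v * psi_T b (k + 1) v * (1 + Yval b k v)) a m u"
  proof (rule rel_cong_Mexpr_nodes[OF assms(1)])
    fix b v
    assume "b = 0 \<or> b \<in> I_sigma X"
    then show "Yrels X h \<turnstile> psi_T b m (v - 1) * psi_T b m (v + 1)
                 \<approx> psi_T b (m - 1) v * psi_T b (m + 1) v * (1 + Yval b m v)"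
    proof
      assume b: "b \<in> I_sigma X"
      then have "b \<noteq> 0"
        using zero_notin_I_sigma by metis
      have "Yrels X h \<turnstile> psi_T b m (v - 1) * psi_T b m (v + 1)
              \<approx> (Mexpr X h psi_T b m v * var (YI b m v)) * (1 + var (YG b m v))"
        using IH[OF b, of v] by (simp add: psi_Y_relation_def ac_simps)
      also have "Yrels X h \<turnstile> \<dots> \<approx> psi_T b (m - 1) v * psi_T b (m + 1) v * (1 + var (YG b m v))"
        by (intro rel_cong_mult rel_cong_refl rel_cong_sym[OF psi_T_pred_mult_succ[OF b assms(2)]])
      finally show ?thesis
        using \<open>b \<noteq> 0\<close> assms(2) by (simp add: Yval_def)
    qed (simp add: psi_T_def node_val_def Yval_def)
  qed
  also have "\<dots> = Mexpr X h psi_T a (m - 1) u * Mexpr X h psi_T a (m + 1) u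
                     * Mexpr X h (\<lambda>b k v. 1 + Yval b k v) a m u"
    by (simp add: Mexpr_mult Mexpr_reindex_level[of X h psi_T "\<lambda>k. k - Suc 0"]
        Mexpr_reindex_level[of X h psi_T Suc])
  finally show ?thesis .
qed

lemma psi_Tinv_Mexpr_pred:
  assumes "a \<in> I_sigma X" "1 \<le> m" and IH: "m = 1 \<or> psi_Y_relation (m - 1) a u"
  shows "Yrels X h \<turnstile> psi_Tinv a (m - 1) (u - 1) * psi_Tinv a (m - 1) (u + 1) * Mexpr X h psi_T a (m - 1) u
           \<approx> Yfac a (m - 1) u"
proof (cases "m = 1")
  case True
  then show ?thesis
    by (simp add: psi_Tinv_def Mexpr_psi_T_zero Yfac_def)
next
  case False
  let ?k = "m - 1"
  let ?J = "psi_Tinv a ?k (u - 1) * psi_Tinv a ?k (u + 1)"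
  have valid: "valid_idx X a ?k"
    using assms False by (simp add: valid_idx_def)
  have "?J * Mexpr X h psi_T a ?k u = ?J * Mexpr X h psi_T a ?k u * 1"
    by simp
  also have "Yrels X h \<turnstile> \<dots> \<approx> ?J * Mexpr X h psi_T a ?k u * (Yfac a ?k u * ((1 + var (YG a ?k u)) * var (YI a ?k u)))"
    by (intro rel_cong_mult rel_cong_refl rel_cong_sym[OF Yfac_mult_Y_ratio[OF valid]])
  also have "\<dots> = ?J * (Mexpr X h psi_T a ?k u * ((1 + var (YG a ?k u)) * var (YI a ?k u))) * Yfac a ?k u"
    by (simp add: ac_simps)
  also have "Yrels X h \<turnstile> \<dots> \<approx> ?J * (psi_T a ?k (u - 1) * psi_T a ?k (u + 1)) * Yfac a ?k u"
  proof -
    have "psi_Y_relation ?k a u"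
      using IH False by simp
    then show ?thesis
      unfolding psi_Y_relation_def by (rule rel_cong_mult[OF rel_cong_mult[OF rel_cong_refl rel_cong_sym] rel_cong_refl])
  qed
  also have "\<dots> = (psi_T a ?k (u - 1) * psi_Tinv a ?k (u - 1)) * (psi_T a ?k (u + 1) * psi_Tinv a ?k (u + 1))
                     * Yfac a ?k u"
    by (simp add: ac_simps)
  also have "Yrels X h \<turnstile> \<dots> \<approx> 1 * 1 * Yfac a ?k u"
    using assms(1) by (intro rel_cong_mult rel_cong_refl psi_T_mult_inv) simp_all
  finally show ?thesis
    by simp
qed

lemma YI_mult_YG_shifts:
  assumes "valid_idx X a m"
  shows "Yrels X h \<turnstile> var (YI a m (u - 1)) * var (YI a m (u + 1))
                      * (var (YG a m (u - 1)) * var (YG a m (u + 1))) \<approx> 1"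
proof -
  have "Yrels X h \<turnstile> (var (YG a m (u - 1)) * var (YI a m (u - 1))) * (var (YG a m (u + 1)) * var (YI a m (u + 1)))
          \<approx> 1 * 1"
    using assms by (intro rel_cong_mult YG_mult_YI)
  then show ?thesis
    by (simp add: ac_simps)
qed

lemma psi_Y_relation_succ:
  assumes a: "a \<in> I_sigma X" and m: "1 \<le> m"
    and IH: "\<And>b v. b \<in> I_sigma X \<Longrightarrow> psi_Y_relation m b v"
    and IH_pred: "m = 1 \<or> psi_Y_relation (m - 1) a u"
  shows "psi_Y_relation (m + 1) a u"
proof -
  have valid: "valid_idx X a m" "valid_idx X a (m + 1)"
    using a m by (simp_all add: valid_idx_def)
  let ?M = "\<lambda>k. Mexpr X h psi_T a k u" and ?N = "Mexpr X h (\<lambda>b k v. 1 + Yval b k v) a m u"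
  let ?J = "psi_Tinv a (m - 1) (u - 1) * psi_Tinv a (m - 1) (u + 1)"
  let ?I = "var (YI a m (u - 1)) * var (YI a m (u + 1))"
  let ?R = "(1 + var (YG a (m + 1) u)) * var (YI a (m + 1) u)"
  have "psi_T a (m + 1) (u - 1) * psi_T a (m + 1) (u + 1)
          = (Mexpr X h psi_T a m (u - 1) * Mexpr X h psi_T a m (u + 1)) * ?I * ?J"
    using psi_T_succ(1)[OF a m] by (simp add: ac_simps)
  also have "Yrels X h \<turnstile> \<dots> \<approx> (?M (m - 1) * ?M (m + 1) * ?N) * ?I * ?J"
    by (intro rel_cong_mult rel_cong_refl Mexpr_psi_T_shift_product a m IH)
  also have "\<dots> = ?M (m + 1) * (?J * ?M (m - 1)) * ?N * ?I"
    by (simp add: ac_simps)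
  also have "Yrels X h \<turnstile> \<dots> \<approx> ?M (m + 1) * Yfac a (m - 1) u * ?N * ?I"
    by (intro rel_cong_mult rel_cong_refl psi_Tinv_Mexpr_pred a m IH_pred)
  also have "\<dots> = ?M (m + 1) * Yfac a (m - 1) u * ?N * ?I * 1"
    by simp
  also have "Yrels X h \<turnstile> \<dots> \<approx> ?M (m + 1) * Yfac a (m - 1) u * ?N * ?I * (Yfac a (m + 1) u * ?R)"
    by (intro rel_cong_mult rel_cong_refl rel_cong_sym[OF Yfac_mult_Y_ratio[OF valid(2)]])
  also have "\<dots> = ?M (m + 1) * ?R * ?I * (?N * Yfac a (m - 1) u * Yfac a (m + 1) u)"
    by (simp add: ac_simps)
  also have "Yrels X h \<turnstile> \<dots> \<approx> ?M (m + 1) * ?R * ?I * (var (YG a m (u - 1)) * var (YG a m (u + 1)))"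
    by (intro rel_cong_mult rel_cong_refl rel_cong_sym[OF Y_system[OF valid(1)]])
  also have "\<dots> = ?M (m + 1) * ?R * (?I * (var (YG a m (u - 1)) * var (YG a m (u + 1))))"
    by (simp add: ac_simps)
  also have "Yrels X h \<turnstile> \<dots> \<approx> ?M (m + 1) * ?R * 1"
    by (intro rel_cong_mult rel_cong_refl YI_mult_YG_shifts[OF valid(1)])
  finally show ?thesis
    by (simp add: psi_Y_relation_def)
qed

lemma psi_Y_relation_holds: "1 \<le> m \<Longrightarrow> a \<in> I_sigma X \<Longrightarrow> psi_Y_relation m a u"
proof (induction m arbitrary: a u rule: less_induct)
  case (less m a u)
  show ?case
  proof (cases "m = 1")
    case True
    then show ?thesis
      using psi_Y_relation_one less.prems(2) by simp
  next
    case False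
    then obtain k where k: "m = k + 1" "1 \<le> k"
      using less.prems(1) by (cases m) auto
    have "psi_Y_relation k b v" if "b \<in> I_sigma X" for b v
      using less.IH[of k b v] k that by simp
    moreover have "k = 1 \<or> psi_Y_relation (k - 1) a u"
    proof (cases "k = 1")
      case False
      then show ?thesis
        using less.IH[of "k - 1" a u] k less.prems(2) by simp
    qed simp
    ultimately show ?thesis
      unfolding k(1) using psi_Y_relation_succ[OF less.prems(2) k(2)] by blast
  qed
qed

lemma psi_T_system:
  assumes "valid_idx X a m"
  shows "Yrels X h \<turnstile> psi_T a m (u - 1) * psi_T a m (u + 1)
           \<approx> psi_T a (m - 1) u * psi_T a (m + 1) u + Mexpr X h psi_T a m u"
proof -
  have a: "a \<in> I_sigma X" and m: "1 \<le> m"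
    using assms by (simp_all add: valid_idx_def)
  have "Yrels X h \<turnstile> psi_T a m (u - 1) * psi_T a m (u + 1)
          \<approx> Mexpr X h psi_T a m u * ((1 + var (YG a m u)) * var (YI a m u))"
    using psi_Y_relation_holds[OF m a] by (simp add: psi_Y_relation_def)
  also have "\<dots> = Mexpr X h psi_T a m u * var (YI a m u) + Mexpr X h psi_T a m u * (var (YG a m u) * var (YI a m u))"
    by (simp add: algebra_simps)
  also have "Yrels X h \<turnstile> \<dots> \<approx> psi_T a (m - 1) u * psi_T a (m + 1) u + Mexpr X h psi_T a m u * 1"
    by (intro rel_cong_add rel_cong_mult rel_cong_refl YG_mult_YI assms
        rel_cong_sym[OF psi_T_pred_mult_succ[OF a m]])
  finally show ?thesis
    by simp
qed

lemma psi_gen_units: "valid_idx X a m \<Longrightarrow> Yrels X h \<turnstile> psi_gen (TG a m u) * psi_gen (TI a m u) \<approx> 1"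
  using periodic_units_psi_units[of m] by (simp add: periodic_units_def valid_idx_def)

lemma psi_gen_periodic:
  "Yrels X h \<turnstile> psi_gen (TG a m u) \<approx> psi_gen (TG a m (u + period X h a))"
  "Yrels X h \<turnstile> psi_gen (TI a m u) \<approx> psi_gen (TI a m (u + period X h a))"
  using periodic_units_psi_units[of m]
  by (auto simp: periodic_units_def valid_idx_def intro: rel_cong_sym)

lemma psi_gen_invalid:
  "\<not> valid_idx X a m \<Longrightarrow> Yrels X h \<turnstile> psi_gen (TG a m u) \<approx> 0"
  "\<not> valid_idx X a m \<Longrightarrow> Yrels X h \<turnstile> psi_gen (TI a m u) \<approx> 0"
  by simp_all

lemma psi_respects_rels: "respects_rels psi_gen (Trels X h) (Yrels X h)"
  unfolding respects_rels_def Trels_def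
  by (intro ballI, elim UnE CollectE exE conjE;
      simp only: poly_subst_diff poly_subst_one poly_subst_var poly_subst_mult poly_subst_add
        rel_cong_zero_iff psi_Tval psi_Mexpr_Tval)
     (assumption | rule psi_T_system psi_gen_units psi_gen_periodic psi_gen_invalid)+

lemma psi_phi_gen: "Yrels X h \<turnstile> poly_subst psi_gen (phi_gen g) \<approx> var g"
proof (cases g)
  case (YG a m u)
  show ?thesis
  proof (cases "valid_idx X a m")
    case True
    then have a: "a \<in> I_sigma X" and m: "1 \<le> m"
      by (simp_all add: valid_idx_def)
    have "poly_subst psi_gen (phi_gen g)
            = (Mexpr X h psi_T a m u * Mexpr X h psi_Tinv a m u) * (psi_T a (m - 1) u * psi_Tinv a (m - 1) u)
              * var (YG a m u)"
      using True YG psi_T_succ(2)[OF a m, of u]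
      by (simp add: phi_img_def psi_Mexpr_Tval psi_Tinvval ac_simps)
    also have "Yrels X h \<turnstile> \<dots> \<approx> 1 * 1 * var (YG a m u)"
      using a by (intro rel_cong_mult rel_cong_refl Mexpr_psi_T_mult_inv psi_T_mult_inv) simp_all
    finally show ?thesis
      using YG by simp
  qed (simp add: YG rel_cong_sym[OF Y_gens_invalid(1)])
next
  case (YI a m u)
  show ?thesis
  proof (cases "valid_idx X a m")
    case True
    then have a: "a \<in> I_sigma X" and m: "1 \<le> m"
      by (simp_all add: valid_idx_def)
    have "poly_subst psi_gen (phi_gen g)
            = (Mexpr X h psi_T a m u * Mexpr X h psi_Tinv a m u) * (psi_T a (m - 1) u * psi_Tinv a (m - 1) u)
              * var (YI a m u)"
      using True YI psi_T_succ(1)[OF a m, of u]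
      by (simp add: psi_Mexpr_Tinvval psi_Tval ac_simps)
    also have "Yrels X h \<turnstile> \<dots> \<approx> 1 * 1 * var (YI a m u)"
      using a by (intro rel_cong_mult rel_cong_refl Mexpr_psi_T_mult_inv psi_T_mult_inv) simp_all
    finally show ?thesis
      using YI by simp
  qed (simp add: YI rel_cong_sym[OF Y_gens_invalid(2)])
next
  case (YW a m u)
  show ?thesis
  proof (cases "valid_idx X a m")
    case True
    then have a: "a \<in> I_sigma X" and m: "1 \<le> m"
      by (simp_all add: valid_idx_def)
    let ?P = "Mexpr X h psi_T a m u * var (YI a m u) * (psi_Tinv a m (u - 1) * psi_Tinv a m (u + 1))"
    have "poly_subst psi_gen (phi_gen g)
            = psi_T a (m - 1) u * psi_T a (m + 1) u * (psi_Tinv a m (u - 1) * psi_Tinv a m (u + 1))"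
      using True YW by (simp add: psi_Tval psi_Tinvval ac_simps)
    also have "Yrels X h \<turnstile> \<dots> \<approx> ?P"
      by (intro rel_cong_mult rel_cong_refl psi_T_pred_mult_succ a m)
    finally have image: "Yrels X h \<turnstile> poly_subst psi_gen (phi_gen g) \<approx> ?P" .
    have "var (YW a m u) = var (YW a m u) * 1 * 1"
      by simp
    also have "Yrels X h \<turnstile> \<dots> \<approx> var (YW a m u) * (psi_T a m (u - 1) * psi_Tinv a m (u - 1))
                                  * (psi_T a m (u + 1) * psi_Tinv a m (u + 1))"
      using a by (intro rel_cong_mult rel_cong_refl rel_cong_sym[OF psi_T_mult_inv]) simp_all
    also have "\<dots> = var (YW a m u) * (psi_T a m (u - 1) * psi_T a m (u + 1))
                       * (psi_Tinv a m (u - 1) * psi_Tinv a m (u + 1))"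
      by (simp add: ac_simps)
    also have "Yrels X h \<turnstile> \<dots> \<approx> var (YW a m u) * (Mexpr X h psi_T a m u * ((1 + var (YG a m u)) * var (YI a m u)))
                                  * (psi_Tinv a m (u - 1) * psi_Tinv a m (u + 1))"
      using psi_Y_relation_holds[OF m a, of u] unfolding psi_Y_relation_def
      by (rule rel_cong_mult[OF rel_cong_mult[OF rel_cong_refl] rel_cong_refl])
    also have "\<dots> = ((1 + var (YG a m u)) * var (YW a m u)) * ?P"
      by (simp add: ac_simps)
    also have "Yrels X h \<turnstile> \<dots> \<approx> 1 * ?P"
      by (intro rel_cong_mult rel_cong_refl one_plus_YG_mult_YW True)
    finally have "Yrels X h \<turnstile> var (YW a m u) \<approx> ?P"
      by simp
    then show ?thesis
      using rel_cong_trans[OF image rel_cong_sym] YW by simp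
  qed (simp add: YW rel_cong_sym[OF Y_gens_invalid(3)])
qed

end

theorem theorem9p13:
  fixes X :: twisted_type and h :: complex
  assumes "valid_twisted X"
    and "\<forall>q\<in>\<rat>. h \<noteq> 2 * pi * \<i> * q"
  shows "\<exists>\<phi>. \<phi> \<in> ring_hom (Yring X h) (Tring X h)
          \<and> (\<forall>a m u. a \<in> I_sigma X \<and> 1 \<le> m \<longrightarrow>
                \<phi> (cls (Yrels X h) (var (YG a m u))) = cls (Trels X h) (phi_img X h a m u))
          \<and> (\<exists>\<psi>. \<psi> \<in> ring_hom (Tring X h) (Yring X h)
                 \<and> (\<forall>x \<in> carrier (Yring X h). \<psi> (\<phi> x) = x))"
proof -
  interpret twisted_irrational h X
    using assms by unfold_locales
  let ?\<phi> = "induced_map (Yrels X h) (Trels X h) phi_gen"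
  let ?\<psi> = "induced_map (Trels X h) (Yrels X h) psi_gen"
  have "?\<phi> \<in> ring_hom (Yring X h) (Tring X h)" "?\<psi> \<in> ring_hom (Tring X h) (Yring X h)"
    unfolding Yring_def Tring_def
    by (intro induced_map_ring_hom phi_respects_rels psi_respects_rels)+
  moreover have "?\<phi> (cls (Yrels X h) (var (YG a m u))) = cls (Trels X h) (phi_img X h a m u)"
    if "a \<in> I_sigma X \<and> 1 \<le> m" for a m u
    using that by (simp add: induced_map_cls[OF phi_respects_rels] valid_idx_def)
  moreover have "?\<psi> (?\<phi> x) = x" if "x \<in> carrier (Yring X h)" for x
    using that unfolding Yring_def
    by (intro induced_map_left_inverse phi_respects_rels psi_respects_rels psi_phi_gen)
  ultimately show ?thesis
    by blast
qed

end
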